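(* Let $\mathcal{L}$ be the generator of a trace preserving quantum dynamical semigroup on $\mathfrak{T}(\mathcal{H})$ which is in generalized standard form with operators $M$ and $L_k$. Then there exists an orthonormal basis $\{e_k\}$ of $\mathcal{H}$ such that $\mathcal{D}_e=\mathrm{span}\{e_k\}$ is a core for $M$ and $\mathcal{D}_e^2=\mathrm{span}\{|e_k\rangle\langle e_\ell|\}$ is a core for $\mathcal{L}$.
   Context: $\mathcal{H}$ is a separable Hilbert space, $\mathfrak{T}(\mathcal{H})$ the trace class operators with trace norm $\|\cdot\|_1$. A trace preserving quantum dynamical semigroup is a strongly continuous semigroup of trace preserving completely positive maps on $\mathfrak{T}(\mathcal{H})$ with generator $\mathcal{L}(\rho)=\lim_{t\to0}\frac1t(\mathcal{T}^t(\rho)-\rho)$. Generalized standard form: there are a closed densely defined operator $M$ generating a semigroup on $\mathcal{H}$ and countably many linear operators $L_k$, each relatively bounded with respect to $M$, such that for all $\phi,\psi\in\mathcal{D}(M)$, $|\phi\rangle\langle\psi|\in\mathcal{D}(\mathcal{L})$ and $\mathcal{L}(|\phi\rangle\langle\psi|)=\sum_k|L_k\phi\rangle\langle L_k\psi|-|M\phi\rangle\langle\psi|-|\phi\rangle\langle M\psi|$; $\mathcal{D}(\mathcal{L})$ is the graph-norm closure ($\|\rho\|_1+\|\mathcal{L}\rho\|_1$) of the set $\mathcal{D}_0$ of finite sums of such $|\phi\rangle\langle\psi|$; and $\sum_k\|L_k\phi\|^2=\langle\phi|M\phi\rangle+\langle M\phi|\phi\rangle$ for all $\phi\in\mathcal{D}(M)$.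 *)

theory Defs
  imports "HOL-Analysis.Analysis"
begin

text \<open>Concrete model of a separable complex Hilbert space: H = l2(I) for a countable
  index type I. Vectors are functions I -> complex; operators are maps on such functions.\<close>

type_synonym 'i vec = "'i \<Rightarrow> complex"
type_synonym 'i op = "'i vec \<Rightarrow> 'i vec"

definition l2 :: "('i::countable) vec set" where
  "l2 = {x. (\<lambda>i. (cmod (x i))\<^sup>2) summable_on UNIV}"

definition inner_l2 :: "('i::countable) vec \<Rightarrow> 'i vec \<Rightarrow> complex" where
  "inner_l2 x y = (\<Sum>\<^sub>\<infinity>i. cnj (x i) * y i)"

definition vnorm :: "('i::countable) vec \<Rightarrow> real" where
  "vnorm x = sqrt (\<Sum>\<^sub>\<infinity>i. (cmod (x i))\<^sup>2)"

definition vadd :: "'i vec \<Rightarrow> 'i vec \<Rightarrow> 'i vec" where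
  "vadd x y = (\<lambda>i. x i + y i)"

definition vsub :: "'i vec \<Rightarrow> 'i vec \<Rightarrow> 'i vec" where
  "vsub x y = (\<lambda>i. x i - y i)"

definition smult :: "complex \<Rightarrow> 'i vec \<Rightarrow> 'i vec" where
  "smult c x = (\<lambda>i. c * x i)"

definition vzero :: "'i vec" where
  "vzero = (\<lambda>i. 0)"

definition subspace_l2 :: "('i::countable) vec set \<Rightarrow> bool" where
  "subspace_l2 D \<longleftrightarrow> D \<subseteq> l2 \<and> vzero \<in> D \<and>
     (\<forall>x\<in>D. \<forall>y\<in>D. \<forall>c. vadd x (smult c y) \<in> D)"

definition linear_on :: "'i vec set \<Rightarrow> 'i op \<Rightarrow> bool" where
  "linear_on D f \<longleftrightarrow> (\<forall>x\<in>D. \<forall>y\<in>D. \<forall>c. f (vadd x (smult c y)) = vadd (f x) (smult c (f y)))"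

text \<open>Operators on trace class elements: difference, scaling, finite sums.
  Trace-class operators are normalised to vanish outside l2, so that they are
  genuinely determined by their action on H.\<close>

definition opsub :: "'i op \<Rightarrow> 'i op \<Rightarrow> 'i op" where
  "opsub A B = (\<lambda>x. vsub (A x) (B x))"

definition opadd :: "'i op \<Rightarrow> 'i op \<Rightarrow> 'i op" where
  "opadd A B = (\<lambda>x. vadd (A x) (B x))"

definition opscale :: "complex \<Rightarrow> 'i op \<Rightarrow> 'i op" where
  "opscale c A = (\<lambda>x. smult c (A x))"

definition opzero :: "'i op" where
  "opzero = (\<lambda>x. vzero)"

definition opsum :: "nat \<Rightarrow> (nat \<Rightarrow> 'i op) \<Rightarrow> 'i op" where
  "opsum n A = (\<lambda>x. (\<lambda>i. \<Sum>k<n. A k x i))"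

definition ketbra :: "('i::countable) vec \<Rightarrow> 'i vec \<Rightarrow> 'i op" where
  "ketbra \<phi> \<psi> = (\<lambda>x. if x \<in> l2 then smult (inner_l2 \<psi> x) \<phi> else vzero)"

definition orthonormal_fam :: "nat \<Rightarrow> (nat \<Rightarrow> ('i::countable) vec) \<Rightarrow> bool" where
  "orthonormal_fam N \<phi> \<longleftrightarrow> (\<forall>n<N. \<phi> n \<in> l2) \<and>
     (\<forall>n<N. \<forall>m<N. inner_l2 (\<phi> n) (\<phi> m) = (if n = m then 1 else 0))"

definition tnorm :: "('i::countable) op \<Rightarrow> ennreal" where
  "tnorm A = (SUP N. SUP p \<in> {(\<phi>, \<psi>). orthonormal_fam N \<phi> \<and> orthonormal_fam N \<psi>}.
       ennreal (\<Sum>n<N. cmod (inner_l2 (fst p n) (A (snd p n)))))"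

definition trace_class :: "('i::countable) op \<Rightarrow> bool" where
  "trace_class A \<longleftrightarrow> (\<forall>x. x \<notin> l2 \<longrightarrow> A x = vzero) \<and> A ` l2 \<subseteq> l2 \<and>
     linear_on l2 A \<and> tnorm A < \<infinity>"

definition trace :: "('i::countable) op \<Rightarrow> complex" where
  "trace A = (\<Sum>\<^sub>\<infinity>i. A (\<lambda>j. if j = i then 1 else 0) i)"

text \<open>Complete positivity: id_n (x) Phi is positive on T(C^n (x) H) = M_n(T(H)) for all n.\<close>

definition block_pos :: "nat \<Rightarrow> (nat \<Rightarrow> nat \<Rightarrow> ('i::countable) op) \<Rightarrow> bool" where
  "block_pos n \<rho> \<longleftrightarrow> (\<forall>x. (\<forall>i<n. x i \<in> l2) \<longrightarrow>
      (let s = (\<Sum>i<n. \<Sum>j<n. inner_l2 (x i) (\<rho> i j (x j))) in Im s = 0 \<and> 0 \<le> Re s))"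

definition completely_positive :: "(('i::countable) op \<Rightarrow> 'i op) \<Rightarrow> bool" where
  "completely_positive \<Phi> \<longleftrightarrow> (\<forall>n \<rho>. (\<forall>i<n. \<forall>j<n. trace_class (\<rho> i j)) \<longrightarrow>
      block_pos n \<rho> \<longrightarrow> block_pos n (\<lambda>i j. \<Phi> (\<rho> i j)))"

definition tp_qds :: "(real \<Rightarrow> ('i::countable) op \<Rightarrow> 'i op) \<Rightarrow> bool" where
  "tp_qds T \<longleftrightarrow>
     (\<forall>t\<ge>0. \<forall>\<rho>. trace_class \<rho> \<longrightarrow> trace_class (T t \<rho>)) \<and>
     (\<forall>t\<ge>0. \<forall>\<rho> \<sigma> c. trace_class \<rho> \<longrightarrow> trace_class \<sigma> \<longrightarrow>
        T t (opadd \<rho> (opscale c \<sigma>)) = opadd (T t \<rho>) (opscale c (T t \<sigma>))) \<and>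
     (\<forall>t\<ge>0. \<exists>C::real. \<forall>\<rho>. trace_class \<rho> \<longrightarrow> tnorm (T t \<rho>) \<le> ennreal C * tnorm \<rho>) \<and>
     (\<forall>t\<ge>0. completely_positive (T t)) \<and>
     (\<forall>t\<ge>0. \<forall>\<rho>. trace_class \<rho> \<longrightarrow> trace (T t \<rho>) = trace \<rho>) \<and>
     (\<forall>\<rho>. trace_class \<rho> \<longrightarrow> T 0 \<rho> = \<rho>) \<and>
     (\<forall>s\<ge>0. \<forall>t\<ge>0. \<forall>\<rho>. trace_class \<rho> \<longrightarrow> T (s + t) \<rho> = T s (T t \<rho>)) \<and>
     (\<forall>\<rho>. trace_class \<rho> \<longrightarrow> ((\<lambda>t. tnorm (opsub (T t \<rho>) \<rho>)) \<longlongrightarrow> 0) (at_right 0))"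

text \<open>The generator, as a relation: gen T rho sigma means rho in D(L) and L rho = sigma.\<close>

definition gen :: "(real \<Rightarrow> ('i::countable) op \<Rightarrow> 'i op) \<Rightarrow> 'i op \<Rightarrow> 'i op \<Rightarrow> bool" where
  "gen T \<rho> \<sigma> \<longleftrightarrow> trace_class \<rho> \<and> trace_class \<sigma> \<and>
     ((\<lambda>t. tnorm (opsub (opscale (complex_of_real (1 / t)) (opsub (T t \<rho>) \<rho>)) \<sigma>)) \<longlongrightarrow> 0) (at_right 0)"

definition gen_dom :: "(real \<Rightarrow> ('i::countable) op \<Rightarrow> 'i op) \<Rightarrow> 'i op set" where
  "gen_dom T = {\<rho>. \<exists>\<sigma>. gen T \<rho> \<sigma>}"

definition graph_closure :: "(real \<Rightarrow> ('i::countable) op \<Rightarrow> 'i op) \<Rightarrow> 'i op set \<Rightarrow> 'i op set" where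
  "graph_closure T D = {\<rho>. \<exists>\<sigma>. gen T \<rho> \<sigma> \<and> (\<exists>r s. (\<forall>n. r n \<in> D \<and> gen T (r n) (s n)) \<and>
       (\<lambda>n. tnorm (opsub (r n) \<rho>)) \<longlonglongrightarrow> 0 \<and> (\<lambda>n. tnorm (opsub (s n) \<sigma>)) \<longlonglongrightarrow> 0)}"

definition is_core_gen :: "(real \<Rightarrow> ('i::countable) op \<Rightarrow> 'i op) \<Rightarrow> 'i op set \<Rightarrow> bool" where
  "is_core_gen T D \<longleftrightarrow> D \<subseteq> gen_dom T \<and> graph_closure T D = gen_dom T"

definition D0 :: "('i::countable) vec set \<Rightarrow> 'i op set" where
  "D0 DM = {opsum n (\<lambda>k. ketbra (a k) (b k)) | (n::nat) a b. \<forall>k<n. a k \<in> DM \<and> b k \<in> DM}"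

definition closed_op :: "('i::countable) vec set \<Rightarrow> 'i op \<Rightarrow> bool" where
  "closed_op DM M \<longleftrightarrow> (\<forall>y x z. (\<forall>n. y n \<in> DM) \<longrightarrow> x \<in> l2 \<longrightarrow> z \<in> l2 \<longrightarrow>
      (\<lambda>n. vnorm (vsub (y n) x)) \<longlonglongrightarrow> 0 \<longrightarrow> (\<lambda>n. vnorm (vsub (M (y n)) z)) \<longlonglongrightarrow> 0 \<longrightarrow>
      x \<in> DM \<and> M x = z)"

definition densely_defined :: "('i::countable) vec set \<Rightarrow> bool" where
  "densely_defined DM \<longleftrightarrow> (\<forall>x\<in>l2. \<forall>e>0. \<exists>y\<in>DM. vnorm (vsub x y) < e)"

definition c0_semigroup_l2 :: "(real \<Rightarrow> ('i::countable) op) \<Rightarrow> bool" where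
  "c0_semigroup_l2 S \<longleftrightarrow>
     (\<forall>t\<ge>0. S t ` l2 \<subseteq> l2) \<and> (\<forall>t\<ge>0. linear_on l2 (S t)) \<and>
     (\<forall>t\<ge>0. \<exists>C. \<forall>x\<in>l2. vnorm (S t x) \<le> C * vnorm x) \<and>
     (\<forall>x\<in>l2. S 0 x = x) \<and>
     (\<forall>s\<ge>0. \<forall>t\<ge>0. \<forall>x\<in>l2. S (s + t) x = S s (S t x)) \<and>
     (\<forall>x\<in>l2. ((\<lambda>t. vnorm (vsub (S t x) x)) \<longlongrightarrow> 0) (at_right 0))"

definition is_generator_l2 :: "(real \<Rightarrow> ('i::countable) op) \<Rightarrow> 'i vec set \<Rightarrow> 'i op \<Rightarrow> bool" where
  "is_generator_l2 S DA A \<longleftrightarrow> c0_semigroup_l2 S \<and> DA \<subseteq> l2 \<and>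
     (\<forall>x\<in>l2. x \<in> DA \<longleftrightarrow> (\<exists>z\<in>l2.
        ((\<lambda>t. vnorm (vsub (smult (complex_of_real (1 / t)) (vsub (S t x) x)) z)) \<longlongrightarrow> 0) (at_right 0))) \<and>
     (\<forall>x\<in>DA. A x \<in> l2 \<and>
        ((\<lambda>t. vnorm (vsub (smult (complex_of_real (1 / t)) (vsub (S t x) x)) (A x))) \<longlongrightarrow> 0) (at_right 0))"

definition rel_bounded :: "('i::countable) vec set \<Rightarrow> 'i op \<Rightarrow> 'i op \<Rightarrow> bool" where
  "rel_bounded DM M B \<longleftrightarrow> (\<forall>\<phi>\<in>DM. B \<phi> \<in> l2) \<and> linear_on DM B \<and>
     (\<exists>a b. \<forall>\<phi>\<in>DM. vnorm (B \<phi>) \<le> a * vnorm (M \<phi>) + b * vnorm \<phi>)"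

text \<open>Generalized standard form of the generator of T with operators (DM, M) and L_k, k in nat.
  "M generates a semigroup" is read as: -M is the generator of a C0-semigroup on H
  (the semigroup e^{-tM}).\<close>

definition gen_standard_form ::
  "(real \<Rightarrow> ('i::countable) op \<Rightarrow> 'i op) \<Rightarrow> 'i vec set \<Rightarrow> 'i op \<Rightarrow> (nat \<Rightarrow> 'i op) \<Rightarrow> bool" where
  "gen_standard_form T DM M L \<longleftrightarrow>
     subspace_l2 DM \<and> (\<forall>\<phi>\<in>DM. M \<phi> \<in> l2) \<and> linear_on DM M \<and>
     closed_op DM M \<and> densely_defined DM \<and>
     (\<exists>S. is_generator_l2 S DM (\<lambda>x. smult (-1) (M x))) \<and>
     (\<forall>k. rel_bounded DM M (L k)) \<and>
     (\<forall>\<phi>\<in>DM. \<forall>\<psi>\<in>DM. \<exists>\<sigma>. gen T (ketbra \<phi> \<psi>) \<sigma> \<and>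
        (\<lambda>n. tnorm (opsub (opsub (opsub (opsum n (\<lambda>k. ketbra (L k \<phi>) (L k \<psi>)))
                 (ketbra (M \<phi>) \<psi>)) (ketbra \<phi> (M \<psi>))) \<sigma>)) \<longlonglongrightarrow> 0) \<and>
     gen_dom T = graph_closure T (D0 DM) \<and>
     (\<forall>\<phi>\<in>DM. (\<lambda>k. complex_of_real ((vnorm (L k \<phi>))\<^sup>2)) sums
        (inner_l2 \<phi> (M \<phi>) + inner_l2 (M \<phi>) \<phi>))"

definition orthonormal_basis :: "('i::countable) vec set \<Rightarrow> bool" where
  "orthonormal_basis E \<longleftrightarrow> E \<subseteq> l2 \<and>
     (\<forall>e\<in>E. \<forall>e'\<in>E. inner_l2 e e' = (if e = e' then 1 else 0)) \<and>
     (\<forall>x\<in>l2. (\<forall>e\<in>E. inner_l2 e x = 0) \<longrightarrow> x = vzero)"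

definition lspan :: "'i vec set \<Rightarrow> 'i vec set" where
  "lspan E = {(\<lambda>i. \<Sum>k<n. c k * e k i) | (n::nat) c e. \<forall>k<n. e k \<in> E}"

definition lspan2 :: "('i::countable) vec set \<Rightarrow> 'i op set" where
  "lspan2 E = {opsum n (\<lambda>k. opscale (c k) (ketbra (a k) (b k))) | (n::nat) c a b.
                 \<forall>k<n. a k \<in> E \<and> b k \<in> E}"

definition is_core_op :: "('i::countable) vec set \<Rightarrow> 'i op \<Rightarrow> 'i vec set \<Rightarrow> bool" where
  "is_core_op DM M D \<longleftrightarrow> D \<subseteq> DM \<and>
     (\<forall>x\<in>DM. \<exists>y. (\<forall>n. y n \<in> D) \<and> (\<lambda>n. vnorm (vsub (y n) x)) \<longlonglongrightarrow> 0 \<and>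
                   (\<lambda>n. vnorm (vsub (M (y n)) (M x))) \<longlonglongrightarrow> 0)"

end

theory Submission
  imports Defs
begin

text \<open>Since \<open>H\<close> is separable, so is the graph of \<open>M\<close>; pick a sequence \<open>(d\<^sub>n)\<close> in \<open>D(M)\<close>
  that is dense for the graph norm. Gram-Schmidt applied to \<open>(d\<^sub>n)\<close> yields an orthonormal family
  \<open>(e\<^sub>k)\<close> in \<open>D(M)\<close> whose span contains every \<open>d\<^sub>n\<close>, so that span is a core for \<open>M\<close>, and the family is
  complete because \<open>D(M)\<close> is dense in \<open>H\<close>.
  For the generator, the standard form gives \<open>\<Sum>\<^sub>k \<parallel>L\<^sub>k \<phi>\<parallel>\<^sup>2 = 2 Re \<langle>\<phi>, M\<phi>\<rangle> \<le> 2 \<parallel>\<phi>\<parallel> \<parallel>M\<phi>\<parallel>\<close>. Together with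
  \<open>\<parallel>|u\<rangle>\<langle>v|\<parallel>\<^sub>1 \<le> \<parallel>u\<parallel> \<parallel>v\<parallel>\<close> and Cauchy-Schwarz this makes \<open>(\<phi>, \<psi>) \<mapsto> \<L>(|\<phi>\<rangle>\<langle>\<psi>|)\<close> continuous for the graph
  norm of \<open>M\<close>. Hence every element of the core \<open>D\<^sub>0\<close> is approximated in the graph norm of \<open>\<L>\<close> by
  elements of \<open>span {|e\<^sub>k\<rangle>\<langle>e\<^sub>l|}\<close>, which is therefore a core as well.\<close>

section \<open>The Hilbert space \<open>l2\<close>\<close>

lemma cmod_add_squared_le: "(cmod (a + b))\<^sup>2 \<le> 2 * (cmod a)\<^sup>2 + 2 * (cmod b)\<^sup>2"
proof -
  have "(cmod (a + b))\<^sup>2 \<le> (cmod a + cmod b)\<^sup>2" by (simp add: norm_triangle_ineq power_mono)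
  also have "\<dots> \<le> 2 * (cmod a)\<^sup>2 + 2 * (cmod b)\<^sup>2"
    using zero_le_power2[of "cmod a - cmod b"] by (simp add: power2_sum power2_diff)
  finally show ?thesis .
qed

lemma l2_vzero [simp]: "vzero \<in> l2"
  by (simp add: l2_def vzero_def)

lemma l2_smult [simp]: "x \<in> l2 \<Longrightarrow> smult c x \<in> l2"
  unfolding l2_def smult_def by (simp add: norm_mult power_mult_distrib summable_on_cmult_right)

lemma l2_vadd [simp]:
  assumes "x \<in> l2" "y \<in> l2"
  shows "vadd x y \<in> l2"
proof -
  have "(\<lambda>i. 2 * (cmod (x i))\<^sup>2 + 2 * (cmod (y i))\<^sup>2) summable_on UNIV"
    using assms by (auto simp: l2_def intro!: summable_on_add summable_on_cmult_right)
  then show ?thesis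
    unfolding l2_def vadd_def mem_Collect_eq
    by (rule summable_on_comparison_test) (auto simp: cmod_add_squared_le)
qed

lemma vsub_conv_vadd: "vsub x y = vadd x (smult (-1) y)"
  by (simp add: vsub_def vadd_def smult_def fun_eq_iff)

lemma l2_vsub [simp]: "x \<in> l2 \<Longrightarrow> y \<in> l2 \<Longrightarrow> vsub x y \<in> l2"
  by (simp add: vsub_conv_vadd)

lemma vsub_vzero [simp]: "vsub x vzero = x"
  by (simp add: vsub_def vzero_def)

lemma l2_finite_support:
  assumes "finite {i. y i \<noteq> 0}"
  shows "y \<in> l2"
  using assms unfolding l2_def by (simp add: finite_nonzero_values_imp_summable_on)

lemma inner_l2_summable:
  assumes "x \<in> l2" "y \<in> l2"
  shows "(\<lambda>i. cnj (x i) * y i) summable_on UNIV"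
proof -
  have "(\<lambda>i. (1/2) * ((cmod (x i))\<^sup>2 + (cmod (y i))\<^sup>2)) summable_on UNIV"
    using assms unfolding l2_def by (intro summable_on_cmult_right summable_on_add) auto
  then have "(\<lambda>i. norm (cnj (x i) * y i)) summable_on UNIV"
  proof (rule summable_on_comparison_test)
    fix i
    show "norm (cnj (x i) * y i) \<le> (1/2) * ((cmod (x i))\<^sup>2 + (cmod (y i))\<^sup>2)"
      using sum_squares_bound[of "cmod (x i)" "cmod (y i)"] by (simp add: norm_mult)
  qed auto
  then show ?thesis by (rule abs_summable_summable)
qed

definition lincomb :: "nat \<Rightarrow> (nat \<Rightarrow> complex) \<Rightarrow> (nat \<Rightarrow> 'i vec) \<Rightarrow> 'i vec" where
  "lincomb n c e = (\<lambda>i. \<Sum>k<n. c k * e k i)"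

lemma lincomb_0 [simp]: "lincomb 0 c e = vzero"
  by (simp add: lincomb_def vzero_def)

lemma lincomb_Suc: "lincomb (Suc n) c e = vadd (lincomb n c e) (smult (c n) (e n))"
  by (simp add: lincomb_def vadd_def smult_def fun_eq_iff)

lemma lincomb_cong:
  "(\<And>j. j < n \<Longrightarrow> c j = c' j) \<Longrightarrow> (\<And>j. j < n \<Longrightarrow> e j = e' j) \<Longrightarrow> lincomb n c e = lincomb n c' e'"
  unfolding lincomb_def by (intro ext sum.cong) auto

lemma lspan_eq_lincomb: "lspan E = {lincomb n c e | n c e. \<forall>k<n. e k \<in> E}"
  by (simp add: lspan_def lincomb_def)

lemma l2_lincomb: "(\<And>k. k < n \<Longrightarrow> e k \<in> l2) \<Longrightarrow> lincomb n c e \<in> l2"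
  by (induction n) (simp_all add: lincomb_Suc)

lemma inner_l2_add_right:
  "x \<in> l2 \<Longrightarrow> y \<in> l2 \<Longrightarrow> z \<in> l2 \<Longrightarrow> inner_l2 x (vadd y z) = inner_l2 x y + inner_l2 x z"
  unfolding inner_l2_def vadd_def by (simp add: distrib_left infsum_add inner_l2_summable)

lemma inner_l2_smult_right: "inner_l2 x (smult c y) = c * inner_l2 x y"
  unfolding inner_l2_def smult_def by (simp add: infsum_cmult_right'[symmetric] mult.left_commute)

lemma inner_l2_commute: "inner_l2 y x = cnj (inner_l2 x y)"
  unfolding inner_l2_def infsum_cnj[symmetric] by (simp add: mult.commute)

lemma inner_l2_add_left:
  "x \<in> l2 \<Longrightarrow> y \<in> l2 \<Longrightarrow> z \<in> l2 \<Longrightarrow> inner_l2 (vadd y z) x = inner_l2 y x + inner_l2 z x"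
  by (metis complex_cnj_add inner_l2_add_right inner_l2_commute)

lemma inner_l2_smult_left: "inner_l2 (smult c y) x = cnj c * inner_l2 y x"
  by (metis complex_cnj_mult inner_l2_commute inner_l2_smult_right)

lemma inner_l2_diff_right:
  "x \<in> l2 \<Longrightarrow> y \<in> l2 \<Longrightarrow> z \<in> l2 \<Longrightarrow> inner_l2 x (vsub y z) = inner_l2 x y - inner_l2 x z"
  by (simp add: vsub_conv_vadd inner_l2_add_right inner_l2_smult_right)

lemma inner_l2_diff_left:
  "x \<in> l2 \<Longrightarrow> y \<in> l2 \<Longrightarrow> z \<in> l2 \<Longrightarrow> inner_l2 (vsub y z) x = inner_l2 y x - inner_l2 z x"
  by (simp add: vsub_conv_vadd inner_l2_add_left inner_l2_smult_left)

lemma inner_l2_vzero_left [simp]: "inner_l2 vzero x = 0"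
  by (simp add: inner_l2_def vzero_def)

lemma inner_l2_vzero_right [simp]: "inner_l2 x vzero = 0"
  by (simp add: inner_l2_def vzero_def)

lemma inner_l2_lincomb_right:
  assumes "\<And>k. k < n \<Longrightarrow> e k \<in> l2" "x \<in> l2"
  shows "inner_l2 x (lincomb n c e) = (\<Sum>k<n. c k * inner_l2 x (e k))"
  using assms by (induction n) (simp_all add: lincomb_Suc inner_l2_add_right l2_lincomb inner_l2_smult_right)

lemma inner_l2_lincomb_left:
  assumes "\<And>k. k < n \<Longrightarrow> e k \<in> l2" "x \<in> l2"
  shows "inner_l2 (lincomb n c e) x = (\<Sum>k<n. cnj (c k) * inner_l2 (e k) x)"
  using assms by (simp add: inner_l2_commute[of _ x] inner_l2_lincomb_right)

lemma vnorm_nonneg [simp]: "0 \<le> vnorm x"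
  by (simp add: vnorm_def infsum_nonneg)

lemma vnorm_squared: "(vnorm x)\<^sup>2 = (\<Sum>\<^sub>\<infinity>i. (cmod (x i))\<^sup>2)"
  by (simp add: vnorm_def infsum_nonneg)

lemma vnorm_vzero [simp]: "vnorm vzero = 0"
  by (simp add: vnorm_def vzero_def)

lemma inner_l2_self:
  assumes "x \<in> l2"
  shows "inner_l2 x x = complex_of_real ((vnorm x)\<^sup>2)"
proof -
  have "(\<lambda>i. (cmod (x i))\<^sup>2) summable_on UNIV" using assms by (simp add: l2_def)
  then have "((\<lambda>i. complex_of_real ((cmod (x i))\<^sup>2)) has_sum complex_of_real ((vnorm x)\<^sup>2)) UNIV"
    unfolding vnorm_squared by (intro has_sum_of_real) (simp add: summable_iff_has_sum_infsum)
  then show ?thesis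
    unfolding inner_l2_def
    by (intro infsumI) (simp add: complex_norm_square mult.commute del: of_real_power)
qed

lemma vnorm_eq_zero:
  assumes "x \<in> l2" "vnorm x = 0"
  shows "x = vzero"
proof
  fix i
  have s: "(\<lambda>i. (cmod (x i))\<^sup>2) summable_on UNIV" using assms by (simp add: l2_def)
  have "(\<Sum>\<^sub>\<infinity>i. (cmod (x i))\<^sup>2) \<le> 0" using assms vnorm_squared[of x] by simp
  then have "(cmod (x i))\<^sup>2 = 0" by (rule nonneg_infsum_le_0D[OF _ s]) simp_all
  then show "x i = vzero i" by (simp add: vzero_def)
qed

lemma vnorm_smult: "vnorm (smult c x) = cmod c * vnorm x"
proof -
  have "(\<Sum>\<^sub>\<infinity>i. (cmod (smult c x i))\<^sup>2) = (cmod c)\<^sup>2 * (\<Sum>\<^sub>\<infinity>i. (cmod (x i))\<^sup>2)"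
    unfolding smult_def by (simp add: norm_mult power_mult_distrib infsum_cmult_right')
  then show ?thesis by (simp add: vnorm_def real_sqrt_mult)
qed

lemma mult_le_weighted_squares:
  fixes a b t :: real
  assumes "t > 0"
  shows "a * b \<le> (t * a\<^sup>2 + b\<^sup>2 / t) / 2"
proof -
  have "2 * t * (a * b) \<le> t * (t * a\<^sup>2 + b\<^sup>2 / t)"
    using zero_le_power2[of "t * a - b"] assms
    by (simp add: power2_diff power_mult_distrib algebra_simps power2_eq_square)
  then show ?thesis using assms by (simp add: mult.assoc)
qed

lemma norm_inner_l2_le:
  assumes x: "x \<in> l2" and y: "y \<in> l2"
  shows "cmod (inner_l2 x y) \<le> vnorm x * vnorm y"
proof (cases "vnorm x = 0 \<or> vnorm y = 0")
  case True
  then have "x = vzero \<or> y = vzero" using vnorm_eq_zero x y by blast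
  then show ?thesis by auto
next
  case False
  then have px: "vnorm x > 0" and py: "vnorm y > 0" using vnorm_nonneg by (auto simp: less_le)
  define t where "t = vnorm y / vnorm x"
  have t: "t > 0" using px py by (simp add: t_def)
  have sx: "(\<lambda>i. t * (cmod (x i))\<^sup>2) summable_on UNIV"
    using x unfolding l2_def by (auto intro: summable_on_cmult_right)
  have sy: "(\<lambda>i. (1/t) * (cmod (y i))\<^sup>2) summable_on UNIV"
    using y unfolding l2_def mem_Collect_eq by (rule summable_on_cmult_right)
  have abs: "(\<lambda>i. norm (cnj (x i) * y i)) summable_on UNIV"
    using summable_on_iff_abs_summable_on_complex[THEN iffD1, OF inner_l2_summable[OF x y]] by simp
  have "cmod (inner_l2 x y) \<le> (\<Sum>\<^sub>\<infinity>i. norm (cnj (x i) * y i))"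
    unfolding inner_l2_def by (rule norm_infsum_bound) (use abs in simp)
  also have "\<dots> \<le> (\<Sum>\<^sub>\<infinity>i. (1/2) * (t * (cmod (x i))\<^sup>2 + (1/t) * (cmod (y i))\<^sup>2))"
  proof (rule infsum_mono[OF abs])
    show "(\<lambda>i. (1/2) * (t * (cmod (x i))\<^sup>2 + (1/t) * (cmod (y i))\<^sup>2)) summable_on UNIV"
      using summable_on_add[OF sx sy] by (rule summable_on_cmult_right)
    show "norm (cnj (x i) * y i) \<le> (1/2) * (t * (cmod (x i))\<^sup>2 + (1/t) * (cmod (y i))\<^sup>2)" for i
      using mult_le_weighted_squares[OF t, of "cmod (x i)" "cmod (y i)"] by (simp add: norm_mult)
  qed
  also have "\<dots> = (1/2) * (t * (vnorm x)\<^sup>2 + (1/t) * (vnorm y)\<^sup>2)"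
    using sx sy by (simp only: infsum_cmult_right' infsum_add vnorm_squared)
  also have "\<dots> = vnorm x * vnorm y" using px py by (simp add: t_def power2_eq_square)
  finally show ?thesis .
qed

lemma vnorm_triangle:
  assumes x: "x \<in> l2" and y: "y \<in> l2"
  shows "vnorm (vadd x y) \<le> vnorm x + vnorm y"
proof -
  have "inner_l2 (vadd x y) (vadd x y) = inner_l2 x x + inner_l2 y y + (inner_l2 x y + inner_l2 y x)"
    using x y by (simp add: inner_l2_add_left inner_l2_add_right)
  then have "complex_of_real ((vnorm (vadd x y))\<^sup>2)
      = complex_of_real ((vnorm x)\<^sup>2) + complex_of_real ((vnorm y)\<^sup>2) + (inner_l2 x y + inner_l2 y x)"
    using x y by (simp only: inner_l2_self l2_vadd)
  from arg_cong[where f = Re, OF this]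
  have "(vnorm (vadd x y))\<^sup>2 = (vnorm x)\<^sup>2 + (vnorm y)\<^sup>2 + Re (inner_l2 x y + inner_l2 y x)"
    by simp
  also have "Re (inner_l2 x y + inner_l2 y x) = 2 * Re (inner_l2 x y)"
    by (subst inner_l2_commute[of y x]) simp
  also have "\<dots> \<le> 2 * (vnorm x * vnorm y)"
    using complex_Re_le_cmod[of "inner_l2 x y"] norm_inner_l2_le[OF x y] by simp
  finally have "(vnorm (vadd x y))\<^sup>2 \<le> (vnorm x + vnorm y)\<^sup>2" by (simp add: power2_sum)
  then show ?thesis by (rule power2_le_imp_le) simp
qed

lemma vnorm_sub_commute: "vnorm (vsub x y) = vnorm (vsub y x)"
proof -
  have "vsub y x = smult (-1) (vsub x y)" by (simp add: vsub_def smult_def fun_eq_iff)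
  then show ?thesis by (simp add: vnorm_smult)
qed

lemma vnorm_sub_triangle:
  assumes "x \<in> l2" "y \<in> l2" "z \<in> l2"
  shows "vnorm (vsub x z) \<le> vnorm (vsub x y) + vnorm (vsub y z)"
proof -
  have "vsub x z = vadd (vsub x y) (vsub y z)" by (simp add: vsub_def vadd_def fun_eq_iff)
  then show ?thesis using vnorm_triangle[of "vsub x y" "vsub y z"] assms by simp
qed

lemma abs_vnorm_diff_le:
  assumes "x \<in> l2" "y \<in> l2"
  shows "\<bar>vnorm x - vnorm y\<bar> \<le> vnorm (vsub x y)"
  using vnorm_sub_triangle[of x y vzero] vnorm_sub_triangle[of y x vzero] assms vnorm_sub_commute[of x y]
  by simp

lemma tendsto_vnorm:
  assumes "(\<lambda>m. vnorm (vsub (z m) b)) \<longlonglongrightarrow> 0" "\<And>m. z m \<in> l2" "b \<in> l2"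
  shows "(\<lambda>m. vnorm (z m)) \<longlonglongrightarrow> vnorm b"
proof -
  have "(\<lambda>m. \<bar>vnorm (z m) - vnorm b\<bar>) \<longlonglongrightarrow> 0"
    by (rule tendsto_sandwich[OF always_eventually always_eventually tendsto_const assms(1)])
       (use abs_vnorm_diff_le assms(2,3) in auto)
  then show ?thesis by (simp add: tendsto_rabs_zero_iff LIM_zero_iff)
qed

lemma bessel_inequality:
  assumes on: "orthonormal_fam N \<phi>" and a: "a \<in> l2"
  shows "(\<Sum>n<N. (cmod (inner_l2 (\<phi> n) a))\<^sup>2) \<le> (vnorm a)\<^sup>2"
proof -
  define c where "c n = inner_l2 (\<phi> n) a" for n
  define p where "p = lincomb N c \<phi>"
  have phi: "\<And>k. k < N \<Longrightarrow> \<phi> k \<in> l2" using on by (simp add: orthonormal_fam_def)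
  have p: "p \<in> l2" unfolding p_def using phi by (rule l2_lincomb)
  have S: "(\<Sum>k<N. c k * cnj (c k)) = complex_of_real (\<Sum>n<N. (cmod (c n))\<^sup>2)"
    by (simp add: complex_norm_square del: of_real_power)
  have ap: "inner_l2 a p = (\<Sum>k<N. c k * cnj (c k))"
    unfolding p_def using phi a
    by (simp add: inner_l2_lincomb_right c_def) (metis inner_l2_commute)
  have pa: "inner_l2 p a = (\<Sum>k<N. c k * cnj (c k))"
    unfolding p_def using phi a by (simp add: inner_l2_lincomb_left c_def mult.commute)
  have "inner_l2 (\<phi> k) p = c k" if "k < N" for k
  proof -
    have "inner_l2 (\<phi> k) p = (\<Sum>j<N. c j * (if k = j then 1 else 0))"
      unfolding p_def using phi that on by (simp add: inner_l2_lincomb_right orthonormal_fam_def)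
    also have "\<dots> = c k" using that by (simp add: if_distrib cong: if_cong)
    finally show ?thesis .
  qed
  then have pp: "inner_l2 p p = (\<Sum>k<N. c k * cnj (c k))"
    unfolding p_def[symmetric] using phi p
    by (subst (1) p_def) (simp add: inner_l2_lincomb_left mult.commute)
  have "inner_l2 (vsub a p) (vsub a p) = inner_l2 a a - (\<Sum>k<N. c k * cnj (c k))"
    using a p by (simp add: inner_l2_diff_left inner_l2_diff_right ap pa pp)
  then have "complex_of_real ((vnorm (vsub a p))\<^sup>2) = complex_of_real ((vnorm a)\<^sup>2 - (\<Sum>n<N. (cmod (c n))\<^sup>2))"
    using a p by (simp add: inner_l2_self S)
  then have "(vnorm (vsub a p))\<^sup>2 = (vnorm a)\<^sup>2 - (\<Sum>n<N. (cmod (c n))\<^sup>2)"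
    using of_real_eq_iff by blast
  then show ?thesis using zero_le_power2[of "vnorm (vsub a p)"] by (simp add: c_def)
qed

section \<open>The trace norm\<close>

definition maps_l2 :: "('i::countable) op \<Rightarrow> bool" where
  "maps_l2 A \<longleftrightarrow> (\<forall>x\<in>l2. A x \<in> l2)"

definition pairing_sum :: "nat \<Rightarrow> (nat \<Rightarrow> ('i::countable) vec) \<Rightarrow> (nat \<Rightarrow> 'i vec) \<Rightarrow> 'i op \<Rightarrow> real" where
  "pairing_sum N \<phi> \<psi> A = (\<Sum>n<N. cmod (inner_l2 (\<phi> n) (A (\<psi> n))))"

lemma pairing_sum_nonneg: "0 \<le> pairing_sum N \<phi> \<psi> A"
  unfolding pairing_sum_def by (simp add: sum_nonneg)

lemma tnorm_conv_pairing_sum: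
  "tnorm A = (SUP N. SUP p \<in> {(\<phi>, \<psi>). orthonormal_fam N \<phi> \<and> orthonormal_fam N \<psi>}.
     ennreal (pairing_sum N (fst p) (snd p) A))"
  unfolding tnorm_def pairing_sum_def ..

lemma tnorm_leI:
  assumes "\<And>N \<phi> \<psi>. orthonormal_fam N \<phi> \<Longrightarrow> orthonormal_fam N \<psi> \<Longrightarrow> ennreal (pairing_sum N \<phi> \<psi> A) \<le> B"
  shows "tnorm A \<le> B"
  unfolding tnorm_conv_pairing_sum using assms by (intro SUP_least) auto

lemma pairing_sum_le_tnorm:
  assumes "orthonormal_fam N \<phi>" "orthonormal_fam N \<psi>"
  shows "ennreal (pairing_sum N \<phi> \<psi> A) \<le> tnorm A"
proof -
  have "ennreal (pairing_sum N \<phi> \<psi> A) \<le> (SUP p \<in> {(\<phi>, \<psi>). orthonormal_fam N \<phi> \<and> orthonormal_fam N \<psi>}.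
     ennreal (pairing_sum N (fst p) (snd p) A))"
    using assms by (intro SUP_upper2[of "(\<phi>, \<psi>)"]) auto
  also have "\<dots> \<le> tnorm A" unfolding tnorm_conv_pairing_sum by (rule SUP_upper) simp
  finally show ?thesis .
qed

lemma orthonormal_fam_l2: "orthonormal_fam N \<phi> \<Longrightarrow> n < N \<Longrightarrow> \<phi> n \<in> l2"
  by (simp add: orthonormal_fam_def)

lemma maps_l2_opadd [simp]: "maps_l2 A \<Longrightarrow> maps_l2 B \<Longrightarrow> maps_l2 (opadd A B)"
  by (simp add: maps_l2_def opadd_def)

lemma maps_l2_opsub [simp]: "maps_l2 A \<Longrightarrow> maps_l2 B \<Longrightarrow> maps_l2 (opsub A B)"
  by (simp add: maps_l2_def opsub_def)

lemma maps_l2_opscale [simp]: "maps_l2 A \<Longrightarrow> maps_l2 (opscale c A)"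
  by (simp add: maps_l2_def opscale_def)

lemma maps_l2_ketbra [simp]: "a \<in> l2 \<Longrightarrow> maps_l2 (ketbra a b)"
  by (simp add: maps_l2_def ketbra_def)

lemma maps_l2_opzero [simp]: "maps_l2 opzero"
  by (simp add: maps_l2_def opzero_def)

lemma opsum_0 [simp]: "opsum 0 F = opzero"
  by (simp add: opsum_def opzero_def vzero_def fun_eq_iff)

lemma opsum_Suc: "opsum (Suc n) F = opadd (opsum n F) (F n)"
  by (simp add: opsum_def opadd_def vadd_def fun_eq_iff)

lemma opsum_cong: "(\<And>k. k < n \<Longrightarrow> F k = G k) \<Longrightarrow> opsum n F = opsum n G"
  unfolding opsum_def by (intro ext sum.cong) auto

lemma opsum_diff: "opsub (opsum n F) (opsum n G) = opsum n (\<lambda>k. opsub (F k) (G k))"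
  by (simp add: opsub_def opsum_def vsub_def fun_eq_iff sum_subtractf)

lemma maps_l2_opsum: "(\<And>k. k < n \<Longrightarrow> maps_l2 (F k)) \<Longrightarrow> maps_l2 (opsum n F)"
  by (induction n) (auto simp: opsum_Suc)

lemma opsub_conv_opadd: "opsub A B = opadd A (opscale (-1) B)"
  by (simp add: opsub_def opadd_def opscale_def vsub_def vadd_def smult_def fun_eq_iff)

lemma opsub_opadd_opadd: "opsub (opadd A B) (opadd C D) = opadd (opsub A C) (opsub B D)"
  by (simp add: opsub_def opadd_def vsub_def vadd_def fun_eq_iff)

lemma opscale_1 [simp]: "opscale 1 A = A"
  by (simp add: opscale_def smult_def fun_eq_iff)

lemma opsub_opzero [simp]: "opsub opzero opzero = opzero"
  by (simp add: opsub_def opzero_def vsub_def vzero_def)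

lemma tnorm_opzero [simp]: "tnorm (opzero :: ('i::countable) op) = 0"
proof -
  have "tnorm (opzero :: 'i op) \<le> 0" by (rule tnorm_leI) (simp add: pairing_sum_def opzero_def)
  then show ?thesis by simp
qed

lemma tnorm_opadd_le:
  fixes A B :: "('i::countable) op"
  assumes "maps_l2 A" "maps_l2 B"
  shows "tnorm (opadd A B) \<le> tnorm A + tnorm B"
proof (rule tnorm_leI)
  fix N and \<phi> \<psi> :: "nat \<Rightarrow> 'i vec"
  assume f: "orthonormal_fam N \<phi>" "orthonormal_fam N \<psi>"
  have "pairing_sum N \<phi> \<psi> (opadd A B) \<le> pairing_sum N \<phi> \<psi> A + pairing_sum N \<phi> \<psi> B"
    unfolding pairing_sum_def sum.distrib[symmetric]
  proof (rule sum_mono)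
    fix n assume "n \<in> {..<N}"
    then have "\<phi> n \<in> l2" "\<psi> n \<in> l2" using f orthonormal_fam_l2 by auto
    then have "inner_l2 (\<phi> n) (opadd A B (\<psi> n)) = inner_l2 (\<phi> n) (A (\<psi> n)) + inner_l2 (\<phi> n) (B (\<psi> n))"
      using assms unfolding opadd_def maps_l2_def by (simp add: inner_l2_add_right)
    then show "cmod (inner_l2 (\<phi> n) (opadd A B (\<psi> n)))
        \<le> cmod (inner_l2 (\<phi> n) (A (\<psi> n))) + cmod (inner_l2 (\<phi> n) (B (\<psi> n)))"
      by (simp add: norm_triangle_ineq)
  qed
  then have "ennreal (pairing_sum N \<phi> \<psi> (opadd A B))
      \<le> ennreal (pairing_sum N \<phi> \<psi> A) + ennreal (pairing_sum N \<phi> \<psi> B)"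
    by (simp add: pairing_sum_nonneg ennreal_plus[symmetric] del: ennreal_plus)
  also have "\<dots> \<le> tnorm A + tnorm B" using f by (intro add_mono pairing_sum_le_tnorm)
  finally show "ennreal (pairing_sum N \<phi> \<psi> (opadd A B)) \<le> tnorm A + tnorm B" .
qed

lemma tnorm_opscale_le:
  fixes A :: "('i::countable) op"
  assumes "maps_l2 A"
  shows "tnorm (opscale c A) \<le> ennreal (cmod c) * tnorm A"
proof (rule tnorm_leI)
  fix N and \<phi> \<psi> :: "nat \<Rightarrow> 'i vec"
  assume f: "orthonormal_fam N \<phi>" "orthonormal_fam N \<psi>"
  have "pairing_sum N \<phi> \<psi> (opscale c A) = cmod c * pairing_sum N \<phi> \<psi> A"
    unfolding pairing_sum_def sum_distrib_left
    by (intro sum.cong refl) (simp add: opscale_def inner_l2_smult_right norm_mult)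
  then have "ennreal (pairing_sum N \<phi> \<psi> (opscale c A)) = ennreal (cmod c) * ennreal (pairing_sum N \<phi> \<psi> A)"
    by (simp add: ennreal_mult pairing_sum_nonneg)
  also have "\<dots> \<le> ennreal (cmod c) * tnorm A" using f by (intro mult_left_mono pairing_sum_le_tnorm) auto
  finally show "ennreal (pairing_sum N \<phi> \<psi> (opscale c A)) \<le> ennreal (cmod c) * tnorm A" .
qed

lemma tnorm_opsub_le:
  assumes "maps_l2 A" "maps_l2 B"
  shows "tnorm (opsub A B) \<le> tnorm A + tnorm B"
proof -
  have "tnorm (opsub A B) \<le> tnorm A + tnorm (opscale (-1) B)"
    unfolding opsub_conv_opadd using assms by (intro tnorm_opadd_le) auto
  also have "tnorm (opscale (-1) B) \<le> tnorm B" using tnorm_opscale_le[OF assms(2), of "-1"] by simp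
  finally show ?thesis by (simp add: add_left_mono)
qed

lemma tnorm_opsub_commute: "tnorm (opsub A B) = tnorm (opsub B A)"
proof -
  have "pairing_sum N \<phi> \<psi> (opsub A B) = pairing_sum N \<phi> \<psi> (opsub B A)" for N \<phi> \<psi>
    unfolding pairing_sum_def
  proof (intro sum.cong refl)
    fix n
    have "opsub B A (\<psi> n) = smult (-1) (opsub A B (\<psi> n))"
      by (simp add: opsub_def vsub_def smult_def fun_eq_iff)
    then show "cmod (inner_l2 (\<phi> n) (opsub A B (\<psi> n))) = cmod (inner_l2 (\<phi> n) (opsub B A (\<psi> n)))"
      by (simp add: inner_l2_smult_right)
  qed
  then show ?thesis unfolding tnorm_conv_pairing_sum by simp
qed

lemma tnorm_opsub_triangle:
  assumes "maps_l2 A" "maps_l2 B" "maps_l2 C"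
  shows "tnorm (opsub A C) \<le> tnorm (opsub A B) + tnorm (opsub B C)"
proof -
  have "opsub A C = opadd (opsub A B) (opsub B C)"
    by (simp add: opsub_def opadd_def vsub_def vadd_def fun_eq_iff)
  then show ?thesis using assms by (simp add: tnorm_opadd_le)
qed

lemma tnorm_opsum_le:
  assumes "\<And>k. k < n \<Longrightarrow> maps_l2 (F k)"
  shows "tnorm (opsum n F) \<le> (\<Sum>k<n. tnorm (F k))"
  using assms
proof (induction n)
  case (Suc n)
  have "tnorm (opsum (Suc n) F) \<le> tnorm (opsum n F) + tnorm (F n)"
    unfolding opsum_Suc using Suc.prems by (intro tnorm_opadd_le maps_l2_opsum) auto
  also have "\<dots> \<le> (\<Sum>k<n. tnorm (F k)) + tnorm (F n)" using Suc by (intro add_right_mono) auto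
  finally show ?case by simp
qed simp

lemma sum_mult_le_sqrt_sum_squares:
  fixes p q :: "nat \<Rightarrow> real"
  shows "(\<Sum>k\<in>I. p k * q k) \<le> sqrt (\<Sum>k\<in>I. (p k)\<^sup>2) * sqrt (\<Sum>k\<in>I. (q k)\<^sup>2)"
proof -
  have "(\<Sum>k\<in>I. p k * q k) \<le> sqrt ((\<Sum>k\<in>I. p k * q k)\<^sup>2)" by simp
  also have "\<dots> \<le> sqrt ((\<Sum>k\<in>I. (p k)\<^sup>2) * (\<Sum>k\<in>I. (q k)\<^sup>2))"
    by (rule real_sqrt_le_mono[OF Cauchy_Schwarz_ineq_sum])
  finally show ?thesis by (simp add: real_sqrt_mult)
qed

lemma tnorm_ketbra_le:
  fixes a b :: "('i::countable) vec"
  assumes a: "a \<in> l2" and b: "b \<in> l2"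
  shows "tnorm (ketbra a b) \<le> ennreal (vnorm a * vnorm b)"
proof (rule tnorm_leI)
  fix N and \<phi> \<psi> :: "nat \<Rightarrow> 'i vec"
  assume f: "orthonormal_fam N \<phi>" "orthonormal_fam N \<psi>"
  have "pairing_sum N \<phi> \<psi> (ketbra a b) = (\<Sum>n<N. cmod (inner_l2 (\<psi> n) b) * cmod (inner_l2 (\<phi> n) a))"
    unfolding pairing_sum_def
  proof (intro sum.cong refl)
    fix n assume "n \<in> {..<N}"
    then have "\<psi> n \<in> l2" using f orthonormal_fam_l2 by auto
    then show "cmod (inner_l2 (\<phi> n) (ketbra a b (\<psi> n))) = cmod (inner_l2 (\<psi> n) b) * cmod (inner_l2 (\<phi> n) a)"
      by (simp add: ketbra_def inner_l2_smult_right norm_mult inner_l2_commute[of b])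
  qed
  also have "\<dots> \<le> sqrt (\<Sum>n<N. (cmod (inner_l2 (\<psi> n) b))\<^sup>2) * sqrt (\<Sum>n<N. (cmod (inner_l2 (\<phi> n) a))\<^sup>2)"
    by (rule sum_mult_le_sqrt_sum_squares)
  also have "\<dots> \<le> vnorm b * vnorm a"
    using bessel_inequality[OF f(2) b] bessel_inequality[OF f(1) a]
    by (intro mult_mono) (auto simp: real_le_lsqrt sum_nonneg)
  finally show "ennreal (pairing_sum N \<phi> \<psi> (ketbra a b)) \<le> ennreal (vnorm a * vnorm b)"
    by (simp add: mult.commute)
qed

lemma ketbra_diff:
  assumes "v \<in> l2" "v' \<in> l2"
  shows "opsub (ketbra u v) (ketbra u' v') = opadd (ketbra (vsub u u') v) (ketbra u' (vsub v v'))"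
proof (intro ext)
  fix x i
  show "opsub (ketbra u v) (ketbra u' v') x i = opadd (ketbra (vsub u u') v) (ketbra u' (vsub v v')) x i"
  proof (cases "x \<in> l2")
    case True
    then have h: "inner_l2 (\<lambda>i. v i - v' i) x = inner_l2 v x - inner_l2 v' x"
      using assms inner_l2_diff_left[of x v v'] by (simp add: vsub_def)
    show ?thesis using True
      by (simp add: ketbra_def opsub_def opadd_def vsub_def vadd_def smult_def h algebra_simps)
  qed (simp add: ketbra_def opsub_def opadd_def vsub_def vadd_def vzero_def)
qed

lemma tnorm_ketbra_diff_le:
  assumes "u \<in> l2" "v \<in> l2" "u' \<in> l2" "v' \<in> l2"
  shows "tnorm (opsub (ketbra u v) (ketbra u' v'))
    \<le> ennreal (vnorm (vsub u u') * vnorm v + vnorm u' * vnorm (vsub v v'))"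
proof -
  have "tnorm (opsub (ketbra u v) (ketbra u' v')) \<le> tnorm (ketbra (vsub u u') v) + tnorm (ketbra u' (vsub v v'))"
    unfolding ketbra_diff[OF assms(2,4)] using assms by (intro tnorm_opadd_le) auto
  also have "\<dots> \<le> ennreal (vnorm (vsub u u') * vnorm v) + ennreal (vnorm u' * vnorm (vsub v v'))"
    using assms by (intro add_mono tnorm_ketbra_le) auto
  also have "\<dots> = ennreal (vnorm (vsub u u') * vnorm v + vnorm u' * vnorm (vsub v v'))"
    by (simp add: ennreal_plus[symmetric] del: ennreal_plus)
  finally show ?thesis .
qed

lemma tnorm_opsub_triangle_ennreal:
  assumes "maps_l2 A" "maps_l2 B" "maps_l2 C" "0 \<le> d\<^sub>1" "0 \<le> d\<^sub>2"
    and "tnorm (opsub A B) \<le> ennreal d\<^sub>1" "tnorm (opsub B C) \<le> ennreal d\<^sub>2"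
  shows "tnorm (opsub A C) \<le> ennreal (d\<^sub>1 + d\<^sub>2)"
proof -
  have "tnorm (opsub A C) \<le> tnorm (opsub A B) + tnorm (opsub B C)"
    using assms by (intro tnorm_opsub_triangle)
  also have "\<dots> \<le> ennreal d\<^sub>1 + ennreal d\<^sub>2" using assms by (intro add_mono)
  finally show ?thesis using assms by (simp add: ennreal_plus)
qed

lemma tnorm_opsub_opadd_ennreal:
  assumes "maps_l2 A" "maps_l2 A'" "maps_l2 B" "maps_l2 B'" "0 \<le> d\<^sub>1" "0 \<le> d\<^sub>2"
    and "tnorm (opsub A B) \<le> ennreal d\<^sub>1" "tnorm (opsub A' B') \<le> ennreal d\<^sub>2"
  shows "tnorm (opsub (opadd A A') (opadd B B')) \<le> ennreal (d\<^sub>1 + d\<^sub>2)"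
proof -
  have "tnorm (opsub (opadd A A') (opadd B B')) \<le> tnorm (opsub A B) + tnorm (opsub A' B')"
    unfolding opsub_opadd_opadd using assms by (intro tnorm_opadd_le) auto
  also have "\<dots> \<le> ennreal d\<^sub>1 + ennreal d\<^sub>2" using assms by (intro add_mono)
  finally show ?thesis using assms by (simp add: ennreal_plus)
qed

section \<open>Trace class operators and the generator\<close>

lemma trace_class_maps_l2: "trace_class A \<Longrightarrow> maps_l2 A"
  by (auto simp: trace_class_def maps_l2_def)

lemma trace_class_opzero [simp]: "trace_class (opzero :: ('i::countable) op)"
  by (simp add: trace_class_def opzero_def linear_on_def vadd_def smult_def vzero_def image_subset_iff fun_eq_iff)
     (simp add: vzero_def[symmetric] opzero_def[symmetric])

lemma trace_class_opadd_opscale: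
  fixes A B :: "('i::countable) op"
  assumes A: "trace_class A" and B: "trace_class B"
  shows "trace_class (opadd A (opscale c B))"
proof -
  have "tnorm (opadd A (opscale c B)) \<le> tnorm A + tnorm (opscale c B)"
    using A B by (intro tnorm_opadd_le) (auto simp: trace_class_maps_l2)
  also have "\<dots> \<le> tnorm A + ennreal (cmod c) * tnorm B"
    using B by (intro add_left_mono tnorm_opscale_le trace_class_maps_l2)
  also have "\<dots> < \<infinity>" using A B by (simp add: trace_class_def ennreal_mult_less_top)
  finally have "tnorm (opadd A (opscale c B)) < \<infinity>" .
  moreover have "linear_on l2 (opadd A (opscale c B))"
    using A B unfolding trace_class_def linear_on_def
    by (auto simp: opadd_def opscale_def vadd_def smult_def fun_eq_iff algebra_simps)
  moreover have "maps_l2 (opadd A (opscale c B))" using A B by (simp add: trace_class_maps_l2)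
  ultimately show ?thesis using A B unfolding trace_class_def maps_l2_def
    by (auto simp: opadd_def opscale_def vadd_def smult_def vzero_def image_subset_iff)
qed

lemma tp_qds_linear:
  assumes "tp_qds T" "t \<ge> 0" "trace_class \<rho>" "trace_class \<sigma>"
  shows "T t (opadd \<rho> (opscale c \<sigma>)) = opadd (T t \<rho>) (opscale c (T t \<sigma>))"
proof -
  have "\<forall>t\<ge>0. \<forall>\<rho> \<sigma> c. trace_class \<rho> \<longrightarrow> trace_class \<sigma> \<longrightarrow>
      T t (opadd \<rho> (opscale c \<sigma>)) = opadd (T t \<rho>) (opscale c (T t \<sigma>))"
    using assms(1) unfolding tp_qds_def by (elim conjE) assumption
  then show ?thesis using assms(2-4) by blast
qed

lemma tp_qds_trace_class:
  assumes "tp_qds T" "t \<ge> 0" "trace_class \<rho>"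
  shows "trace_class (T t \<rho>)"
proof -
  have "\<forall>t\<ge>0. \<forall>\<rho>. trace_class \<rho> \<longrightarrow> trace_class (T t \<rho>)"
    using assms(1) unfolding tp_qds_def by (elim conjE) assumption
  then show ?thesis using assms(2-3) by blast
qed

lemma gen_maps_l2: "gen T \<rho> \<sigma> \<Longrightarrow> maps_l2 \<rho> \<and> maps_l2 \<sigma>"
  by (simp add: gen_def trace_class_maps_l2)

lemma ennreal_tendsto_0_squeeze:
  fixes f g :: "'a \<Rightarrow> ennreal"
  assumes "eventually (\<lambda>t. f t \<le> g t) F" "(g \<longlongrightarrow> 0) F"
  shows "(f \<longlongrightarrow> 0) F"
  by (rule tendsto_sandwich[OF _ assms(1) tendsto_const assms(2)]) simp

lemma gen_opadd_opscale:
  fixes T :: "real \<Rightarrow> ('i::countable) op \<Rightarrow> 'i op"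
  assumes T: "tp_qds T" and g1: "gen T \<rho> \<sigma>" and g2: "gen T \<rho>' \<sigma>'"
  shows "gen T (opadd \<rho> (opscale c \<rho>')) (opadd \<sigma> (opscale c \<sigma>'))"
proof -
  have tc: "trace_class \<rho>" "trace_class \<sigma>" "trace_class \<rho>'" "trace_class \<sigma>'"
    using g1 g2 by (simp_all add: gen_def)
  define D where "D r s t = opsub (opscale (complex_of_real (1 / t)) (opsub (T t r) r)) s" for r s and t :: real
  have l1: "((\<lambda>t. tnorm (D \<rho> \<sigma> t)) \<longlongrightarrow> 0) (at_right 0)"
    and l2: "((\<lambda>t. tnorm (D \<rho>' \<sigma>' t)) \<longlongrightarrow> 0) (at_right 0)"
    using g1 g2 by (simp_all add: gen_def D_def)
  have "((\<lambda>t. tnorm (D \<rho> \<sigma> t) + ennreal (cmod c) * tnorm (D \<rho>' \<sigma>' t)) \<longlongrightarrow> 0 + ennreal (cmod c) * 0) (at_right 0)"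
    by (intro tendsto_add l1 tendsto_mult_ennreal tendsto_const l2) simp
  then have lim: "((\<lambda>t. tnorm (D \<rho> \<sigma> t) + ennreal (cmod c) * tnorm (D \<rho>' \<sigma>' t)) \<longlongrightarrow> 0) (at_right 0)"
    by simp
  have "tnorm (D (opadd \<rho> (opscale c \<rho>')) (opadd \<sigma> (opscale c \<sigma>')) t)
      \<le> tnorm (D \<rho> \<sigma> t) + ennreal (cmod c) * tnorm (D \<rho>' \<sigma>' t)" if "0 < t" for t
  proof -
    have "T t (opadd \<rho> (opscale c \<rho>')) = opadd (T t \<rho>) (opscale c (T t \<rho>'))"
      using that by (intro tp_qds_linear[OF T] tc) simp_all
    then have e: "D (opadd \<rho> (opscale c \<rho>')) (opadd \<sigma> (opscale c \<sigma>')) t = opadd (D \<rho> \<sigma> t) (opscale c (D \<rho>' \<sigma>' t))"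
      unfolding D_def opsub_def opadd_def opscale_def vsub_def vadd_def smult_def fun_eq_iff
      by (simp add: algebra_simps)
    have m: "maps_l2 (D \<rho> \<sigma> t)" "maps_l2 (D \<rho>' \<sigma>' t)"
      using tc tp_qds_trace_class[OF T] that unfolding D_def by (simp_all add: trace_class_maps_l2)
    have "tnorm (opadd (D \<rho> \<sigma> t) (opscale c (D \<rho>' \<sigma>' t))) \<le> tnorm (D \<rho> \<sigma> t) + tnorm (opscale c (D \<rho>' \<sigma>' t))"
      using m by (intro tnorm_opadd_le) auto
    also have "\<dots> \<le> tnorm (D \<rho> \<sigma> t) + ennreal (cmod c) * tnorm (D \<rho>' \<sigma>' t)"
      using m by (intro add_left_mono tnorm_opscale_le)
    finally show ?thesis unfolding e .
  qed
  then have "((\<lambda>t. tnorm (D (opadd \<rho> (opscale c \<rho>')) (opadd \<sigma> (opscale c \<sigma>')) t)) \<longlongrightarrow> 0) (at_right 0)"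
    by (intro ennreal_tendsto_0_squeeze[OF _ lim] eventually_at_right_less[THEN eventually_mono]) auto
  then show ?thesis unfolding gen_def D_def by (intro conjI trace_class_opadd_opscale tc)
qed

lemma gen_opadd: "tp_qds T \<Longrightarrow> gen T \<rho> \<sigma> \<Longrightarrow> gen T \<rho>' \<sigma>' \<Longrightarrow> gen T (opadd \<rho> \<rho>') (opadd \<sigma> \<sigma>')"
  using gen_opadd_opscale[of T \<rho> \<sigma> \<rho>' \<sigma>' 1] by simp

lemma gen_unique:
  fixes T :: "real \<Rightarrow> ('i::countable) op \<Rightarrow> 'i op"
  assumes T: "tp_qds T" and g1: "gen T \<rho> \<sigma>\<^sub>1" and g2: "gen T \<rho> \<sigma>\<^sub>2"
  shows "tnorm (opsub \<sigma>\<^sub>1 \<sigma>\<^sub>2) = 0"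
proof -
  define D where "D t = opscale (complex_of_real (1 / t)) (opsub (T t \<rho>) \<rho>)" for t :: real
  have "((\<lambda>t. tnorm (opsub (D t) \<sigma>\<^sub>1)) \<longlongrightarrow> 0) (at_right 0)" "((\<lambda>t. tnorm (opsub (D t) \<sigma>\<^sub>2)) \<longlongrightarrow> 0) (at_right 0)"
    using g1 g2 by (simp_all add: gen_def D_def)
  then have lim: "((\<lambda>t. tnorm (opsub (D t) \<sigma>\<^sub>1) + tnorm (opsub (D t) \<sigma>\<^sub>2)) \<longlongrightarrow> 0) (at_right 0)"
    using tendsto_add by fastforce
  have "tnorm (opsub \<sigma>\<^sub>1 \<sigma>\<^sub>2) \<le> tnorm (opsub (D t) \<sigma>\<^sub>1) + tnorm (opsub (D t) \<sigma>\<^sub>2)" if "0 < t" for t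
  proof -
    have "maps_l2 (D t)"
      using g1 tp_qds_trace_class[OF T] that unfolding D_def by (simp add: gen_def trace_class_maps_l2)
    then have "tnorm (opsub \<sigma>\<^sub>1 \<sigma>\<^sub>2) \<le> tnorm (opsub \<sigma>\<^sub>1 (D t)) + tnorm (opsub (D t) \<sigma>\<^sub>2)"
      using g1 g2 by (intro tnorm_opsub_triangle) (simp_all add: gen_maps_l2)
    then show ?thesis by (simp add: tnorm_opsub_commute)
  qed
  then have "tnorm (opsub \<sigma>\<^sub>1 \<sigma>\<^sub>2) \<le> 0"
    by (intro tendsto_le[OF _ lim tendsto_const] eventually_at_right_less[THEN eventually_mono]) auto
  then show ?thesis by simp
qed

lemma gen_opzero:
  fixes T :: "real \<Rightarrow> ('i::countable) op \<Rightarrow> 'i op"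
  assumes T: "tp_qds T"
  shows "gen T opzero opzero"
proof -
  have "T t opzero = opzero" if "t \<ge> 0" for t
  proof (intro ext)
    fix x i
    have "opadd opzero (opscale 1 opzero) = (opzero :: 'i op)"
      by (simp add: opadd_def opzero_def vadd_def vzero_def fun_eq_iff)
    then have "T t opzero = opadd (T t opzero) (opscale 1 (T t opzero))"
      using tp_qds_linear[OF T that trace_class_opzero trace_class_opzero, of 1] by simp
    then have "T t opzero x i = opadd (T t opzero) (opscale 1 (T t opzero)) x i"
      by (rule fun_cong[OF fun_cong])
    then have "T t opzero x i = T t opzero x i + T t opzero x i"
      by (simp only: opadd_def vadd_def opscale_def smult_def mult_1)
    then show "T t opzero x i = opzero x i" by (simp add: opzero_def vzero_def)
  qed
  moreover have "opsub (opscale k (opsub opzero opzero)) opzero = (opzero :: 'i op)" for k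
    by (simp add: opsub_def opscale_def vsub_def smult_def opzero_def vzero_def fun_eq_iff)
  ultimately have "\<forall>\<^sub>F t in at_right 0. tnorm (opsub (opscale (complex_of_real (1 / t)) (opsub (T t opzero) opzero)) opzero) = 0"
    by (intro eventually_at_right_less[THEN eventually_mono]) simp
  then show ?thesis unfolding gen_def by (simp add: tendsto_eventually)
qed

definition graph_approx :: "(real \<Rightarrow> ('i::countable) op \<Rightarrow> 'i op) \<Rightarrow> 'i op set \<Rightarrow> 'i op \<Rightarrow> 'i op \<Rightarrow> bool" where
  "graph_approx T D \<rho> \<sigma> \<longleftrightarrow> (\<forall>\<epsilon>>0. \<exists>q s. q \<in> D \<and> gen T q s \<and>
     tnorm (opsub q \<rho>) \<le> ennreal \<epsilon> \<and> tnorm (opsub s \<sigma>) \<le> ennreal \<epsilon>)"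

lemma eventually_tnorm_le:
  assumes "(\<lambda>n. tnorm (f n)) \<longlonglongrightarrow> 0" "\<epsilon> > 0"
  shows "\<forall>\<^sub>F n in sequentially. tnorm (f n) \<le> ennreal \<epsilon>"
  using order_tendstoD(2)[OF assms(1), of "ennreal \<epsilon>"] assms(2)
  by (auto elim: eventually_mono)

lemma graph_closure_eq_graph_approx:
  "graph_closure T D = {\<rho>. \<exists>\<sigma>. gen T \<rho> \<sigma> \<and> graph_approx T D \<rho> \<sigma>}"
proof (intro set_eqI iffI)
  fix \<rho> assume "\<rho> \<in> graph_closure T D"
  then obtain \<sigma> r s where "gen T \<rho> \<sigma>" and rs: "\<forall>n. r n \<in> D \<and> gen T (r n) (s n)"
    and "(\<lambda>n. tnorm (opsub (r n) \<rho>)) \<longlonglongrightarrow> 0" "(\<lambda>n. tnorm (opsub (s n) \<sigma>)) \<longlonglongrightarrow> 0"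
    unfolding graph_closure_def by blast
  moreover have "graph_approx T D \<rho> \<sigma>"
    unfolding graph_approx_def
  proof (intro allI impI)
    fix \<epsilon> :: real assume "\<epsilon> > 0"
    with calculation have "\<forall>\<^sub>F n in sequentially. tnorm (opsub (r n) \<rho>) \<le> ennreal \<epsilon> \<and> tnorm (opsub (s n) \<sigma>) \<le> ennreal \<epsilon>"
      by (intro eventually_conj eventually_tnorm_le) auto
    then obtain n where "tnorm (opsub (r n) \<rho>) \<le> ennreal \<epsilon>" "tnorm (opsub (s n) \<sigma>) \<le> ennreal \<epsilon>"
      by (auto simp: eventually_sequentially)
    with rs show "\<exists>q s. q \<in> D \<and> gen T q s \<and> tnorm (opsub q \<rho>) \<le> ennreal \<epsilon> \<and> tnorm (opsub s \<sigma>) \<le> ennreal \<epsilon>"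
      by blast
  qed
  ultimately show "\<rho> \<in> {\<rho>. \<exists>\<sigma>. gen T \<rho> \<sigma> \<and> graph_approx T D \<rho> \<sigma>}" by blast
next
  fix \<rho> assume "\<rho> \<in> {\<rho>. \<exists>\<sigma>. gen T \<rho> \<sigma> \<and> graph_approx T D \<rho> \<sigma>}"
  then obtain \<sigma> where g: "gen T \<rho> \<sigma>" and "graph_approx T D \<rho> \<sigma>" by blast
  then have "\<forall>n. \<exists>q s. q \<in> D \<and> gen T q s \<and> tnorm (opsub q \<rho>) \<le> ennreal (inverse (Suc n))
      \<and> tnorm (opsub s \<sigma>) \<le> ennreal (inverse (Suc n))"
    unfolding graph_approx_def by simp
  then obtain r s where rs: "\<And>n. r n \<in> D \<and> gen T (r n) (s n) \<and> tnorm (opsub (r n) \<rho>) \<le> ennreal (inverse (Suc n))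
      \<and> tnorm (opsub (s n) \<sigma>) \<le> ennreal (inverse (Suc n))"
    by metis
  have "(\<lambda>n. ennreal (inverse (Suc n))) \<longlonglongrightarrow> ennreal 0"
    by (intro tendsto_ennrealI LIMSEQ_inverse_real_of_nat)
  then have lim: "(\<lambda>n. ennreal (inverse (Suc n))) \<longlonglongrightarrow> 0" by simp
  have "(\<lambda>n. tnorm (opsub (r n) \<rho>)) \<longlonglongrightarrow> 0" "(\<lambda>n. tnorm (opsub (s n) \<sigma>)) \<longlonglongrightarrow> 0"
    using rs by (intro ennreal_tendsto_0_squeeze[OF always_eventually lim]; blast)+
  with g rs show "\<rho> \<in> graph_closure T D" unfolding graph_closure_def by blast
qed

lemma graph_approx_trans:
  assumes "graph_approx T D' \<rho> \<sigma>" "gen T \<rho> \<sigma>"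
    and "\<And>r s. r \<in> D' \<Longrightarrow> gen T r s \<Longrightarrow> graph_approx T D r s"
  shows "graph_approx T D \<rho> \<sigma>"
  unfolding graph_approx_def
proof (intro allI impI)
  fix \<epsilon> :: real assume e: "\<epsilon> > 0"
  obtain r s where rs: "r \<in> D'" "gen T r s" "tnorm (opsub r \<rho>) \<le> ennreal (\<epsilon>/2)" "tnorm (opsub s \<sigma>) \<le> ennreal (\<epsilon>/2)"
    using assms(1) e unfolding graph_approx_def by (meson half_gt_zero)
  obtain q s' where qs: "q \<in> D" "gen T q s'" "tnorm (opsub q r) \<le> ennreal (\<epsilon>/2)" "tnorm (opsub s' s) \<le> ennreal (\<epsilon>/2)"
    using assms(3)[OF rs(1,2)] e unfolding graph_approx_def by (meson half_gt_zero)
  have "tnorm (opsub q \<rho>) \<le> ennreal (\<epsilon>/2 + \<epsilon>/2)" "tnorm (opsub s' \<sigma>) \<le> ennreal (\<epsilon>/2 + \<epsilon>/2)"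
    using rs qs e assms(2) by (intro tnorm_opsub_triangle_ennreal; simp add: gen_maps_l2)+
  then show "\<exists>q s. q \<in> D \<and> gen T q s \<and> tnorm (opsub q \<rho>) \<le> ennreal \<epsilon> \<and> tnorm (opsub s \<sigma>) \<le> ennreal \<epsilon>"
    using qs by auto
qed

lemma graph_approx_opadd:
  assumes T: "tp_qds T" and D: "\<And>q q'. q \<in> D \<Longrightarrow> q' \<in> D \<Longrightarrow> opadd q q' \<in> D"
    and "gen T \<rho> \<sigma>" "gen T \<rho>' \<sigma>'" "graph_approx T D \<rho> \<sigma>" "graph_approx T D \<rho>' \<sigma>'"
  shows "graph_approx T D (opadd \<rho> \<rho>') (opadd \<sigma> \<sigma>')"
  unfolding graph_approx_def
proof (intro allI impI)
  fix \<epsilon> :: real assume e: "\<epsilon> > 0"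
  obtain q s where qs: "q \<in> D" "gen T q s" "tnorm (opsub q \<rho>) \<le> ennreal (\<epsilon>/2)" "tnorm (opsub s \<sigma>) \<le> ennreal (\<epsilon>/2)"
    using assms(5) e unfolding graph_approx_def by (meson half_gt_zero)
  obtain q' s' where qs': "q' \<in> D" "gen T q' s'" "tnorm (opsub q' \<rho>') \<le> ennreal (\<epsilon>/2)" "tnorm (opsub s' \<sigma>') \<le> ennreal (\<epsilon>/2)"
    using assms(6) e unfolding graph_approx_def by (meson half_gt_zero)
  have "tnorm (opsub (opadd q q') (opadd \<rho> \<rho>')) \<le> ennreal (\<epsilon>/2 + \<epsilon>/2)"
    "tnorm (opsub (opadd s s') (opadd \<sigma> \<sigma>')) \<le> ennreal (\<epsilon>/2 + \<epsilon>/2)"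
    using qs qs' e assms(3,4) by (intro tnorm_opsub_opadd_ennreal; simp add: gen_maps_l2)+
  moreover have "opadd q q' \<in> D" "gen T (opadd q q') (opadd s s')"
    using qs qs' by (simp_all add: D gen_opadd[OF T])
  ultimately show "\<exists>q s. q \<in> D \<and> gen T q s \<and> tnorm (opsub q (opadd \<rho> \<rho>')) \<le> ennreal \<epsilon>
      \<and> tnorm (opsub s (opadd \<sigma> \<sigma>')) \<le> ennreal \<epsilon>"
    by auto
qed

lemma graph_approx_gen_cong:
  assumes T: "tp_qds T" and "gen T \<rho> \<sigma>" "gen T \<rho> \<sigma>'" "graph_approx T D \<rho> \<sigma>"
  shows "graph_approx T D \<rho> \<sigma>'"
  unfolding graph_approx_def
proof (intro allI impI)
  fix \<epsilon> :: real assume e: "\<epsilon> > 0"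
  obtain q s where qs: "q \<in> D" "gen T q s" "tnorm (opsub q \<rho>) \<le> ennreal \<epsilon>" "tnorm (opsub s \<sigma>) \<le> ennreal \<epsilon>"
    using assms(4) e unfolding graph_approx_def by blast
  have "tnorm (opsub \<sigma> \<sigma>') \<le> ennreal 0" using gen_unique[OF T assms(2,3)] by simp
  then have "tnorm (opsub s \<sigma>') \<le> ennreal (\<epsilon> + 0)"
    using qs e assms(2,3) by (intro tnorm_opsub_triangle_ennreal) (simp_all add: gen_maps_l2)
  with qs show "\<exists>q s. q \<in> D \<and> gen T q s \<and> tnorm (opsub q \<rho>) \<le> ennreal \<epsilon> \<and> tnorm (opsub s \<sigma>') \<le> ennreal \<epsilon>"
    by auto
qed

section \<open>Separability of \<open>l2\<close>\<close>

text \<open>Finitely supported vectors with entries in \<open>\<rat> + i\<rat>\<close>, coded by lists, form a countable dense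
  subset of \<open>l2\<close>.\<close>

primrec rat_vec :: "(('i::countable) \<times> rat \<times> rat) list \<Rightarrow> 'i vec" where
  "rat_vec [] = vzero"
| "rat_vec (t # ts) = (rat_vec ts)(fst t := Complex (of_rat (fst (snd t))) (of_rat (snd (snd t))))"

lemma rat_vec_l2: "rat_vec ts \<in> l2"
proof (rule l2_finite_support)
  have "{i. rat_vec ts i \<noteq> 0} \<subseteq> fst ` set ts" by (induction ts) (auto simp: vzero_def)
  then show "finite {i. rat_vec ts i \<noteq> 0}" by (rule finite_subset) simp
qed

lemma complex_rat_approx:
  assumes "\<delta> > 0"
  shows "\<exists>p q :: rat. cmod (z - Complex (of_rat p) (of_rat q)) < \<delta>"
proof -
  obtain r\<^sub>1 where r1: "r\<^sub>1 \<in> \<rat>" "Re z < r\<^sub>1" "r\<^sub>1 < Re z + \<delta>/2"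
    using Rats_dense_in_real[of "Re z" "Re z + \<delta>/2"] assms by auto
  obtain r\<^sub>2 where r2: "r\<^sub>2 \<in> \<rat>" "Im z < r\<^sub>2" "r\<^sub>2 < Im z + \<delta>/2"
    using Rats_dense_in_real[of "Im z" "Im z + \<delta>/2"] assms by auto
  have "cmod (z - Complex r\<^sub>1 r\<^sub>2) \<le> \<bar>Re z - r\<^sub>1\<bar> + \<bar>Im z - r\<^sub>2\<bar>"
    using cmod_le[of "z - Complex r\<^sub>1 r\<^sub>2"] by simp
  also have "\<dots> < \<delta>" using r1 r2 by simp
  finally show ?thesis using r1(1) r2(1) by (metis Rats_cases)
qed

lemma rat_vec_approx_on_finite:
  assumes "finite F" "\<delta> > 0"
  shows "\<exists>ts. (\<forall>i\<in>F. cmod (x i - rat_vec ts i) < \<delta>) \<and> (\<forall>i. i \<notin> F \<longrightarrow> rat_vec ts i = 0)"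
  using assms(1)
proof (induction F rule: finite_induct)
  case empty
  show ?case by (intro exI[of _ "[]"]) (simp add: vzero_def)
next
  case (insert j F)
  obtain ts where ts: "\<forall>i\<in>F. cmod (x i - rat_vec ts i) < \<delta>" "\<forall>i. i \<notin> F \<longrightarrow> rat_vec ts i = 0"
    using insert by blast
  obtain p q where "cmod (x j - Complex (of_rat p) (of_rat q)) < \<delta>"
    using complex_rat_approx[OF assms(2)] by blast
  with ts insert(2) show ?case by (intro exI[of _ "(j, p, q) # ts"]) auto
qed

lemma infsum_finite_support:
  fixes h :: "'a \<Rightarrow> real"
  assumes "finite F" "\<And>i. i \<notin> F \<Longrightarrow> h i = 0"
  shows "infsum h UNIV = sum h F"
proof -
  have "infsum h UNIV = infsum h F" by (rule infsum_cong_neutral) (use assms in auto)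
  then show ?thesis using assms by simp
qed

lemma l2_truncation_approx:
  assumes x: "x \<in> l2" and e: "\<epsilon> > 0"
  shows "\<exists>F. finite F \<and> vnorm (vsub x (\<lambda>i. if i \<in> F then x i else 0)) \<le> \<epsilon>"
proof -
  define f where "f i = (cmod (x i))\<^sup>2" for i
  have sf: "f summable_on UNIV" using x unfolding l2_def f_def[abs_def] by simp
  obtain F where F: "finite F" "dist (sum f F) (infsum f UNIV) \<le> \<epsilon>\<^sup>2"
    using infsum_finite_approximation[OF sf, of "\<epsilon>\<^sup>2"] e by auto
  define tail where "tail i = (if i \<in> F then 0 else f i)" for i
  have "infsum f UNIV = infsum (\<lambda>i. (if i \<in> F then f i else 0) + tail i) UNIV"
    by (rule infsum_cong) (simp add: tail_def)
  also have "\<dots> = infsum (\<lambda>i. if i \<in> F then f i else 0) UNIV + infsum tail UNIV"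
  proof (rule infsum_add)
    show "(\<lambda>i. if i \<in> F then f i else 0) summable_on UNIV"
      by (rule finite_nonzero_values_imp_summable_on, rule finite_subset[of _ F]) (use F in auto)
    show "tail summable_on UNIV"
      by (rule summable_on_comparison_test[OF sf]) (auto simp: tail_def f_def)
  qed
  also have "infsum (\<lambda>i. if i \<in> F then f i else 0) UNIV = sum f F"
    using F(1) by (subst infsum_finite_support[of F]) auto
  finally have "infsum tail UNIV = infsum f UNIV - sum f F" by simp
  moreover have "sum f F \<le> infsum f UNIV"
    by (rule finite_sum_le_infsum[OF sf F(1)]) (auto simp: f_def)
  ultimately have "infsum tail UNIV \<le> \<epsilon>\<^sup>2" using F(2) by (simp add: dist_real_def)
  moreover have "(vnorm (vsub x (\<lambda>i. if i \<in> F then x i else 0)))\<^sup>2 = infsum tail UNIV"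
    unfolding vnorm_squared by (rule infsum_cong) (simp add: tail_def f_def vsub_def)
  ultimately have "(vnorm (vsub x (\<lambda>i. if i \<in> F then x i else 0)))\<^sup>2 \<le> \<epsilon>\<^sup>2" by simp
  then have "vnorm (vsub x (\<lambda>i. if i \<in> F then x i else 0)) \<le> \<epsilon>"
    by (rule power2_le_imp_le) (use e in simp)
  with F(1) show ?thesis by blast
qed

lemma rat_vec_approx_finite_support:
  assumes F: "finite F" and e: "\<epsilon> > 0"
  shows "\<exists>ts. vnorm (vsub (\<lambda>i. if i \<in> F then x i else 0) (rat_vec ts)) \<le> \<epsilon>"
proof -
  define n where "n = real (card F) + 1"
  have n: "n \<ge> 1" by (simp add: n_def)
  obtain ts where ts: "\<forall>i\<in>F. cmod (x i - rat_vec ts i) < \<epsilon> / n" "\<forall>i. i \<notin> F \<longrightarrow> rat_vec ts i = 0"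
    using rat_vec_approx_on_finite[OF F, where \<delta> = "\<epsilon> / n" and x = x] e n by auto
  have "(vnorm (vsub (\<lambda>i. if i \<in> F then x i else 0) (rat_vec ts)))\<^sup>2 = (\<Sum>i\<in>F. (cmod (x i - rat_vec ts i))\<^sup>2)"
    unfolding vnorm_squared using F ts(2) by (subst infsum_finite_support[OF F]) (auto simp: vsub_def)
  also have "\<dots> \<le> (\<Sum>i\<in>F. (\<epsilon> / n)\<^sup>2)"
    using ts(1) by (intro sum_mono power_mono) (auto simp: less_imp_le)
  also have "\<dots> = (n - 1) * (\<epsilon> / n)\<^sup>2" by (simp add: n_def)
  also have "\<dots> \<le> n\<^sup>2 * (\<epsilon> / n)\<^sup>2" using n by (intro mult_right_mono) (simp_all add: power2_eq_square order_trans[OF _ mult_right_mono[of 1 n n]])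
  also have "\<dots> = \<epsilon>\<^sup>2" using n by (simp add: power_divide)
  finally have "vnorm (vsub (\<lambda>i. if i \<in> F then x i else 0) (rat_vec ts)) \<le> \<epsilon>"
    by (rule power2_le_imp_le) (use e in simp)
  then show ?thesis by blast
qed

lemma l2_dense_rat_vec:
  assumes x: "x \<in> l2" and e: "\<epsilon> > 0"
  shows "\<exists>ts. vnorm (vsub x (rat_vec ts)) < \<epsilon>"
proof -
  obtain F where F: "finite F" and close: "vnorm (vsub x (\<lambda>i. if i \<in> F then x i else 0)) \<le> \<epsilon>/3"
    using l2_truncation_approx[OF x, of "\<epsilon>/3"] e by auto
  obtain ts where ts: "vnorm (vsub (\<lambda>i. if i \<in> F then x i else 0) (rat_vec ts)) \<le> \<epsilon>/3"
    using rat_vec_approx_finite_support[OF F, of "\<epsilon>/3" x] e by auto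
  have "(\<lambda>i. if i \<in> F then x i else 0) \<in> l2"
    by (rule l2_finite_support, rule finite_subset[OF _ F]) auto
  then have "vnorm (vsub x (rat_vec ts))
      \<le> vnorm (vsub x (\<lambda>i. if i \<in> F then x i else 0)) + vnorm (vsub (\<lambda>i. if i \<in> F then x i else 0) (rat_vec ts))"
    by (rule vnorm_sub_triangle[OF x _ rat_vec_l2])
  then have "vnorm (vsub x (rat_vec ts)) < \<epsilon>" using close ts e by linarith
  then show ?thesis by blast
qed

section \<open>Gram-Schmidt orthonormalisation\<close>

lemma subspace_l2_vadd:
  assumes "subspace_l2 V" "x \<in> V" "y \<in> V"
  shows "vadd x y \<in> V"
proof -
  have "vadd x (smult 1 y) \<in> V" using assms unfolding subspace_l2_def by blast
  then show ?thesis by (simp add: smult_def)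
qed

lemma subspace_l2_smult:
  assumes "subspace_l2 V" "y \<in> V"
  shows "smult c y \<in> V"
proof -
  have "vadd vzero (smult c y) \<in> V" using assms unfolding subspace_l2_def by blast
  then show ?thesis by (simp add: vadd_def vzero_def)
qed

lemma subspace_l2_vsub: "subspace_l2 V \<Longrightarrow> x \<in> V \<Longrightarrow> y \<in> V \<Longrightarrow> vsub x y \<in> V"
  unfolding subspace_l2_def vsub_conv_vadd by blast

lemma subspace_l2_lincomb: "subspace_l2 V \<Longrightarrow> (\<And>k. k < n \<Longrightarrow> e k \<in> V) \<Longrightarrow> lincomb n c e \<in> V"
  by (induction n) (auto simp: lincomb_Suc subspace_l2_vadd subspace_l2_smult subspace_l2_def)

lemma subspace_l2_lspan: "subspace_l2 V \<Longrightarrow> E \<subseteq> V \<Longrightarrow> lspan E \<subseteq> V"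
  unfolding lspan_eq_lincomb by (auto intro!: subspace_l2_lincomb)

lemma inner_l2_projection_residual:
  assumes e: "\<And>k. k < n \<Longrightarrow> e k \<in> l2" "x \<in> l2" "k < n"
    and orth: "\<And>j. j < n \<Longrightarrow> j \<noteq> k \<Longrightarrow> inner_l2 (e k) (e j) = 0"
    and norm: "e k \<noteq> vzero \<Longrightarrow> inner_l2 (e k) (e k) = 1"
  shows "inner_l2 (e k) (vsub x (lincomb n (\<lambda>j. inner_l2 (e j) x) e)) = 0"
proof -
  have "inner_l2 (e k) (lincomb n (\<lambda>j. inner_l2 (e j) x) e) = (\<Sum>j<n. inner_l2 (e j) x * inner_l2 (e k) (e j))"
    using e by (intro inner_l2_lincomb_right) auto
  also have "\<dots> = inner_l2 (e k) x * inner_l2 (e k) (e k)"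
    using orth \<open>k < n\<close> by (subst sum.remove[of _ k]) auto
  also have "\<dots> = inner_l2 (e k) x" using norm by (cases "e k = vzero") auto
  finally show ?thesis using e by (simp add: inner_l2_diff_right l2_lincomb)
qed

definition gs_step :: "(nat \<Rightarrow> ('i::countable) vec) \<Rightarrow> nat \<Rightarrow> (nat \<Rightarrow> 'i vec) \<Rightarrow> 'i vec" where
  "gs_step d n h = (let u = vsub (d n) (lincomb n (\<lambda>j. inner_l2 (h j) (d n)) h) in
     if vnorm u = 0 then vzero else smult (complex_of_real (1 / vnorm u)) u)"

text \<open>\<open>gs_table d n\<close> holds the first \<open>n\<close> Gram-Schmidt vectors of \<open>d\<close>; the zero vector marks an
  index \<open>n\<close> at which \<open>d n\<close> already lies in the span of its predecessors.\<close>

primrec gs_table :: "(nat \<Rightarrow> ('i::countable) vec) \<Rightarrow> nat \<Rightarrow> nat \<Rightarrow> 'i vec" where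
  "gs_table d 0 = (\<lambda>_. vzero)"
| "gs_table d (Suc n) = (gs_table d n)(n := gs_step d n (gs_table d n))"

definition gs :: "(nat \<Rightarrow> ('i::countable) vec) \<Rightarrow> nat \<Rightarrow> 'i vec" where
  "gs d n = gs_table d (Suc n) n"

definition gs_residual :: "(nat \<Rightarrow> ('i::countable) vec) \<Rightarrow> nat \<Rightarrow> 'i vec" where
  "gs_residual d n = vsub (d n) (lincomb n (\<lambda>j. inner_l2 (gs d j) (d n)) (gs d))"

lemma gs_table_eq_gs: "j < n \<Longrightarrow> gs_table d n j = gs d j"
proof (induction n)
  case (Suc n)
  then show ?case by (cases "j = n") (auto simp: gs_def)
qed simp

lemma gs_conv_residual:
  "gs d n = (if vnorm (gs_residual d n) = 0 then vzero
     else smult (complex_of_real (1 / vnorm (gs_residual d n))) (gs_residual d n))"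
proof -
  have "lincomb n (\<lambda>j. inner_l2 (gs_table d n j) (d n)) (gs_table d n)
      = lincomb n (\<lambda>j. inner_l2 (gs d j) (d n)) (gs d)"
    by (rule lincomb_cong) (simp_all add: gs_table_eq_gs)
  then show ?thesis by (simp add: gs_def gs_step_def gs_residual_def Let_def)
qed

definition gs_basis :: "(nat \<Rightarrow> ('i::countable) vec) \<Rightarrow> 'i vec set" where
  "gs_basis d = {gs d n | n. gs d n \<noteq> vzero}"

lemma lincomb_gs_in_lspan: "lincomb n c (gs d) \<in> lspan (gs_basis d)"
proof (cases "gs_basis d = {}")
  case True
  then have "gs d j = vzero" for j unfolding gs_basis_def by blast
  then have "lincomb n c (gs d) = lincomb 0 c (gs d)" by (simp add: lincomb_def vzero_def)
  then show ?thesis unfolding lspan_eq_lincomb by blast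
next
  case False
  then obtain e\<^sub>0 where e0: "e\<^sub>0 \<in> gs_basis d" by blast
  define e where "e j = (if gs d j = vzero then e\<^sub>0 else gs d j)" for j
  define c' where "c' j = (if gs d j = vzero then 0 else c j)" for j
  have "lincomb n c (gs d) = lincomb n c' e"
    unfolding lincomb_def by (intro ext sum.cong refl) (auto simp: e_def c'_def vzero_def)
  moreover have "\<forall>k<n. e k \<in> gs_basis d" using e0 by (auto simp: e_def gs_basis_def)
  ultimately show ?thesis unfolding lspan_eq_lincomb by blast
qed

context
  fixes V :: "('i::countable) vec set" and d :: "nat \<Rightarrow> 'i vec"
  assumes V: "subspace_l2 V" and d: "\<And>n. d n \<in> V"
begin

lemma gs_in_subspace_orthonormal:
  "gs d n \<in> V \<and> (gs d n \<noteq> vzero \<longrightarrow> inner_l2 (gs d n) (gs d n) = 1) \<and> (\<forall>j<n. inner_l2 (gs d j) (gs d n) = 0)"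
proof (induction n rule: less_induct)
  case (less n)
  have l2: "\<And>k. k < n \<Longrightarrow> gs d k \<in> l2" "d n \<in> l2"
    using less d V unfolding subspace_l2_def by blast+
  have orth: "inner_l2 (gs d k) (gs d j) = 0" if "j < n" "k < n" "j \<noteq> k" for j k
  proof (cases "k < j")
    case False
    then have "inner_l2 (gs d j) (gs d k) = 0" using less that by auto
    then show ?thesis by (subst inner_l2_commute) simp
  qed (use less that in blast)
  have res: "gs_residual d n \<in> V"
    unfolding gs_residual_def using V d less by (intro subspace_l2_vsub subspace_l2_lincomb) auto
  have perp: "inner_l2 (gs d k) (gs_residual d n) = 0" if "k < n" for k
    unfolding gs_residual_def using l2 orth less that by (intro inner_l2_projection_residual) auto
  show ?case
  proof (cases "vnorm (gs_residual d n) = 0")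
    case True
    then show ?thesis using gs_conv_residual[of d n] V by (simp add: subspace_l2_def)
  next
    case False
    then have gn: "gs d n = smult (complex_of_real (1 / vnorm (gs_residual d n))) (gs_residual d n)"
      by (simp add: gs_conv_residual[of d n])
    have "vnorm (gs d n) = 1" unfolding gn vnorm_smult using False by (simp add: norm_divide)
    moreover have gV: "gs d n \<in> V" unfolding gn using V res by (rule subspace_l2_smult)
    ultimately have "inner_l2 (gs d n) (gs d n) = 1"
      using inner_l2_self[of "gs d n"] V by (auto simp: subspace_l2_def)
    with gV show ?thesis unfolding gn using perp by (simp add: inner_l2_smult_right)
  qed
qed

lemma gs_in_subspace: "gs d n \<in> V"
  using gs_in_subspace_orthonormal by blast

lemma gs_l2: "gs d n \<in> l2"
  using gs_in_subspace V by (auto simp: subspace_l2_def)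

lemma inner_l2_gs_gs: "inner_l2 (gs d j) (gs d k) = (if j = k \<and> gs d j \<noteq> vzero then 1 else 0)"
proof (cases j k rule: linorder_cases)
  case less
  then show ?thesis using gs_in_subspace_orthonormal[of k] by simp
next
  case equal
  then show ?thesis using gs_in_subspace_orthonormal[of k] by auto
next
  case greater
  then have "inner_l2 (gs d k) (gs d j) = 0" using gs_in_subspace_orthonormal[of j] by simp
  then show ?thesis using greater by (subst inner_l2_commute) simp
qed

lemma in_span_gs: "\<exists>c. d n = lincomb (Suc n) c (gs d)"
proof -
  have dec: "d n = vadd (lincomb n (\<lambda>j. inner_l2 (gs d j) (d n)) (gs d)) (gs_residual d n)"
    by (simp add: gs_residual_def vadd_def vsub_def fun_eq_iff)
  have "gs_residual d n = smult (complex_of_real (vnorm (gs_residual d n))) (gs d n)"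
  proof (cases "vnorm (gs_residual d n) = 0")
    case True
    have "gs_residual d n \<in> l2"
      unfolding gs_residual_def using d[of n] V gs_l2 by (intro l2_vsub l2_lincomb) (auto simp: subspace_l2_def)
    then show ?thesis using True vnorm_eq_zero by (simp add: smult_def vzero_def fun_eq_iff)
  qed (simp add: gs_conv_residual[of d n] smult_def fun_eq_iff)
  then have "d n = lincomb (Suc n) ((\<lambda>j. inner_l2 (gs d j) (d n))(n := complex_of_real (vnorm (gs_residual d n)))) (gs d)"
    by (subst dec) (simp add: lincomb_Suc lincomb_def vadd_def smult_def fun_eq_iff)
  then show ?thesis by blast
qed

lemma gs_basis_subset: "gs_basis d \<subseteq> V"
  unfolding gs_basis_def using gs_in_subspace by blast

lemma inner_l2_gs_basis:
  assumes "e \<in> gs_basis d" "e' \<in> gs_basis d"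
  shows "inner_l2 e e' = (if e = e' then 1 else 0)"
proof -
  obtain j k where jk: "e = gs d j" "e' = gs d k" "gs d j \<noteq> vzero" "gs d k \<noteq> vzero"
    using assms unfolding gs_basis_def by blast
  have "j \<noteq> k \<Longrightarrow> e \<noteq> e'"
    using jk inner_l2_gs_gs[of j k] inner_l2_gs_gs[of j j] by auto
  then show ?thesis using jk inner_l2_gs_gs[of j k] by auto
qed

lemma in_lspan_gs_basis: "d n \<in> lspan (gs_basis d)"
  using in_span_gs[of n] lincomb_gs_in_lspan by metis

end


lemma orthonormal_basisI_dense_span:
  assumes E: "E \<subseteq> l2" "\<And>e e'. e \<in> E \<Longrightarrow> e' \<in> E \<Longrightarrow> inner_l2 e e' = (if e = e' then 1 else 0)"
    and dense: "\<And>x \<epsilon>. x \<in> l2 \<Longrightarrow> \<epsilon> > 0 \<Longrightarrow> \<exists>y\<in>lspan E. vnorm (vsub x y) < \<epsilon>"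
  shows "orthonormal_basis E"
  unfolding orthonormal_basis_def
proof (intro conjI ballI impI E)
  fix x assume x: "x \<in> l2" and perp: "\<forall>e\<in>E. inner_l2 e x = 0"
  show "x = vzero"
  proof (rule ccontr)
    assume "x \<noteq> vzero"
    then have pos: "vnorm x > 0" using vnorm_eq_zero[OF x] vnorm_nonneg[of x] by linarith
    then obtain y where y: "y \<in> lspan E" and close: "vnorm (vsub x y) < vnorm x"
      using dense[OF x] by blast
    obtain n c e where yc: "y = lincomb n c e" and e: "\<forall>k<n. e k \<in> E"
      using y unfolding lspan_eq_lincomb by blast
    have yl2: "y \<in> l2" unfolding yc using e E(1) by (auto intro: l2_lincomb)
    have "inner_l2 y x = 0" unfolding yc using e E(1) x perp by (subst inner_l2_lincomb_left) auto
    then have "inner_l2 x x = inner_l2 (vsub x y) x" using x yl2 by (simp add: inner_l2_diff_left)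
    then have "cmod (inner_l2 x x) \<le> vnorm (vsub x y) * vnorm x"
      using norm_inner_l2_le[of "vsub x y" x] x yl2 by simp
    moreover have "cmod (inner_l2 x x) = (vnorm x)\<^sup>2" using inner_l2_self[OF x] by (simp only: norm_of_real abs_power2)
    ultimately have "(vnorm x)\<^sup>2 \<le> vnorm (vsub x y) * vnorm x" by simp
    then have "vnorm x \<le> vnorm (vsub x y)" using pos by (simp add: power2_eq_square)
    then show False using close by linarith
  qed
qed

section \<open>Spans of rank-one operators\<close>

lemma opsum_append:
  "opadd (opsum n F) (opsum m G) = opsum (n + m) (\<lambda>k. if k < n then F k else G (k - n))"
proof (induction m)
  case 0
  show ?case by (simp add: opadd_def opzero_def vadd_def vzero_def) (rule opsum_cong, simp)
next
  case (Suc m)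
  have "opsum (n + Suc m) (\<lambda>k. if k < n then F k else G (k - n))
      = opadd (opadd (opsum n F) (opsum m G)) (G m)"
    by (simp add: opsum_Suc Suc)
  also have "\<dots> = opadd (opsum n F) (opsum (Suc m) G)"
    by (simp add: opsum_Suc opadd_def vadd_def fun_eq_iff add.assoc)
  finally show ?case by simp
qed

lemma lspan2_opzero: "opzero \<in> lspan2 E"
  unfolding lspan2_def by (rule CollectI, rule exI[of _ 0]) auto

lemma lspan2_opadd:
  assumes "p \<in> lspan2 E" "q \<in> lspan2 E"
  shows "opadd p q \<in> lspan2 E"
proof -
  obtain n c a b where p: "p = opsum n (\<lambda>k. opscale (c k) (ketbra (a k) (b k)))" "\<forall>k<n. a k \<in> E \<and> b k \<in> E"
    using assms(1) unfolding lspan2_def by blast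
  obtain m c' a' b' where q: "q = opsum m (\<lambda>k. opscale (c' k) (ketbra (a' k) (b' k)))" "\<forall>k<m. a' k \<in> E \<and> b' k \<in> E"
    using assms(2) unfolding lspan2_def by blast
  define C where "C k = (if k < n then c k else c' (k - n))" for k
  define A where "A k = (if k < n then a k else a' (k - n))" for k
  define B where "B k = (if k < n then b k else b' (k - n))" for k
  have "opadd p q = opsum (n + m) (\<lambda>k. opscale (C k) (ketbra (A k) (B k)))"
    unfolding p q opsum_append by (rule opsum_cong) (simp add: A_def B_def C_def)
  moreover have "\<forall>k<n + m. A k \<in> E \<and> B k \<in> E" using p(2) q(2) by (auto simp: A_def B_def)
  ultimately show ?thesis unfolding lspan2_def by blast
qed

lemma lspan2_opscale:
  assumes "p \<in> lspan2 E"
  shows "opscale z p \<in> lspan2 E"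
proof -
  obtain n c a b where p: "p = opsum n (\<lambda>k. opscale (c k) (ketbra (a k) (b k)))" "\<forall>k<n. a k \<in> E \<and> b k \<in> E"
    using assms unfolding lspan2_def by blast
  have "opscale z p = opsum n (\<lambda>k. opscale (z * c k) (ketbra (a k) (b k)))"
    unfolding p by (simp add: opscale_def opsum_def smult_def fun_eq_iff sum_distrib_left mult.assoc)
  with p(2) show ?thesis unfolding lspan2_def
    by (intro CollectI exI[of _ n] exI[of _ "\<lambda>k. z * c k"] exI[of _ a] exI[of _ b] conjI) auto
qed

lemma lspan2_opsum: "(\<And>k. k < n \<Longrightarrow> F k \<in> lspan2 E) \<Longrightarrow> opsum n F \<in> lspan2 E"
  by (induction n) (auto simp: lspan2_opzero opsum_Suc intro!: lspan2_opadd)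

lemma ketbra_lincomb_left: "ketbra (lincomb n c e) \<beta> = opsum n (\<lambda>k. opscale (c k) (ketbra (e k) \<beta>))"
  by (simp add: ketbra_def lincomb_def opsum_def opscale_def smult_def vzero_def fun_eq_iff
      sum_distrib_left mult.left_commute)

lemma ketbra_lincomb_right:
  assumes "\<And>j. j < m \<Longrightarrow> f j \<in> l2"
  shows "ketbra \<alpha> (lincomb m d f) = opsum m (\<lambda>j. opscale (cnj (d j)) (ketbra \<alpha> (f j)))"
proof (intro ext)
  fix x i
  show "ketbra \<alpha> (lincomb m d f) x i = opsum m (\<lambda>j. opscale (cnj (d j)) (ketbra \<alpha> (f j))) x i"
  proof (cases "x \<in> l2")
    case True
    then have "inner_l2 (lincomb m d f) x = (\<Sum>j<m. cnj (d j) * inner_l2 (f j) x)"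
      using assms by (simp add: inner_l2_lincomb_left)
    with True show ?thesis by (simp add: ketbra_def opsum_def opscale_def smult_def sum_distrib_right mult.assoc)
  qed (simp add: ketbra_def opsum_def opscale_def smult_def vzero_def)
qed

lemma ketbra_in_lspan2:
  assumes E: "E \<subseteq> l2" and \<alpha>: "\<alpha> \<in> lspan E" and \<beta>: "\<beta> \<in> lspan E"
  shows "ketbra \<alpha> \<beta> \<in> lspan2 E"
proof -
  obtain n c e where a: "\<alpha> = lincomb n c e" "\<forall>k<n. e k \<in> E" using \<alpha> unfolding lspan_eq_lincomb by blast
  obtain m d f where b: "\<beta> = lincomb m d f" "\<forall>k<m. f k \<in> E" using \<beta> unfolding lspan_eq_lincomb by blast
  have f: "\<And>j. j < m \<Longrightarrow> f j \<in> l2" using b(2) E by blast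
  have "ketbra \<alpha> \<beta> = opsum n (\<lambda>k. opscale (c k) (opsum m (\<lambda>j. opscale (cnj (d j)) (ketbra (e k) (f j)))))"
    unfolding a(1) ketbra_lincomb_left b(1) by (rule opsum_cong) (simp only: ketbra_lincomb_right[OF f])
  also have "\<dots> \<in> lspan2 E"
  proof (rule lspan2_opsum, rule lspan2_opscale)
    fix k assume "k < n"
    with a(2) b(2) show "opsum m (\<lambda>j. opscale (cnj (d j)) (ketbra (e k) (f j))) \<in> lspan2 E"
      unfolding lspan2_def by (intro CollectI exI[of _ m] exI[of _ "\<lambda>j. cnj (d j)"] exI[of _ "\<lambda>j. e k"] exI[of _ f]) auto
  qed
  finally show ?thesis .
qed

section \<open>Generators in generalized standard form\<close>

lemma linear_on_vsub: "linear_on D F \<Longrightarrow> x \<in> D \<Longrightarrow> y \<in> D \<Longrightarrow> F (vsub x y) = vsub (F x) (F y)"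
  unfolding linear_on_def vsub_conv_vadd by simp

lemma LIMSEQ_0_less_inverse_Suc:
  fixes f :: "nat \<Rightarrow> real"
  assumes "\<And>m. 0 \<le> f m" "\<And>m. f m < inverse (Suc m)"
  shows "f \<longlonglongrightarrow> 0"
proof (rule tendsto_sandwich[OF always_eventually always_eventually tendsto_const LIMSEQ_inverse_real_of_nat])
  show "\<forall>m. 0 \<le> f m" "\<forall>m. f m \<le> inverse (real (Suc m))" using assms by (simp_all add: less_imp_le)
qed

locale standard_form =
  fixes T :: "real \<Rightarrow> ('i::countable) op \<Rightarrow> 'i op" and DM :: "'i vec set" and M :: "'i op"
    and L :: "nat \<Rightarrow> 'i op"
  assumes tp_qds: "tp_qds T" and standard_form: "gen_standard_form T DM M L"
begin

lemma DM_subspace: "subspace_l2 DM"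
  using standard_form unfolding gen_standard_form_def by (elim conjE)

lemma M_l2: "x \<in> DM \<Longrightarrow> M x \<in> l2"
  using standard_form unfolding gen_standard_form_def by blast

lemma M_linear: "linear_on DM M"
  using standard_form unfolding gen_standard_form_def by (elim conjE)

lemma DM_dense: "densely_defined DM"
  using standard_form unfolding gen_standard_form_def by (elim conjE)

lemma L_rel_bounded: "rel_bounded DM M (L k)"
  using standard_form unfolding gen_standard_form_def by (elim conjE) blast

lemma gen_ketbra_standard_form:
  "\<phi> \<in> DM \<Longrightarrow> \<psi> \<in> DM \<Longrightarrow> \<exists>\<sigma>. gen T (ketbra \<phi> \<psi>) \<sigma> \<and>
     (\<lambda>n. tnorm (opsub (opsub (opsub (opsum n (\<lambda>k. ketbra (L k \<phi>) (L k \<psi>)))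
        (ketbra (M \<phi>) \<psi>)) (ketbra \<phi> (M \<psi>))) \<sigma>)) \<longlonglongrightarrow> 0"
  using standard_form unfolding gen_standard_form_def by (elim conjE) blast

lemma gen_dom_standard_form: "gen_dom T = graph_closure T (D0 DM)"
  using standard_form unfolding gen_standard_form_def by (elim conjE)

lemma jump_norms_sums:
  "\<phi> \<in> DM \<Longrightarrow> (\<lambda>k. complex_of_real ((vnorm (L k \<phi>))\<^sup>2)) sums (inner_l2 \<phi> (M \<phi>) + inner_l2 (M \<phi>) \<phi>)"
  using standard_form unfolding gen_standard_form_def by (elim conjE) blast

lemma DM_l2: "x \<in> DM \<Longrightarrow> x \<in> l2"
  using DM_subspace unfolding subspace_l2_def by blast

lemma L_l2: "x \<in> DM \<Longrightarrow> L k x \<in> l2"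
  using L_rel_bounded unfolding rel_bounded_def by blast

lemma L_linear: "linear_on DM (L k)"
  using L_rel_bounded unfolding rel_bounded_def by blast

lemma sum_jump_norms_le:
  assumes "\<phi> \<in> DM"
  shows "(\<Sum>k<n. (vnorm (L k \<phi>))\<^sup>2) \<le> 2 * (vnorm \<phi> * vnorm (M \<phi>))"
proof -
  have s: "(\<lambda>k. (vnorm (L k \<phi>))\<^sup>2) sums Re (inner_l2 \<phi> (M \<phi>) + inner_l2 (M \<phi>) \<phi>)"
    using sums_Re[OF jump_norms_sums[OF assms]] by simp
  have "(\<Sum>k<n. (vnorm (L k \<phi>))\<^sup>2) \<le> (\<Sum>k. (vnorm (L k \<phi>))\<^sup>2)"
    by (rule sum_le_suminf[OF sums_summable[OF s]]) auto
  also have "\<dots> = 2 * Re (inner_l2 \<phi> (M \<phi>))"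
    using sums_unique[OF s] by (subst (asm) inner_l2_commute[of "M \<phi>"]) simp
  also have "\<dots> \<le> 2 * (vnorm \<phi> * vnorm (M \<phi>))"
    using complex_Re_le_cmod[of "inner_l2 \<phi> (M \<phi>)"] norm_inner_l2_le[OF DM_l2[OF assms] M_l2[OF assms]]
    by simp
  finally show ?thesis .
qed

definition jump_sum :: "nat \<Rightarrow> 'i vec \<Rightarrow> 'i vec \<Rightarrow> 'i op" where
  "jump_sum n a b = opsum n (\<lambda>k. ketbra (L k a) (L k b))"

definition gen_partial :: "nat \<Rightarrow> 'i vec \<Rightarrow> 'i vec \<Rightarrow> 'i op" where
  "gen_partial n a b = opsub (opsub (jump_sum n a b) (ketbra (M a) b)) (ketbra a (M b))"

definition gen_ketbra :: "'i vec \<Rightarrow> 'i vec \<Rightarrow> 'i op" where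
  "gen_ketbra a b = (SOME \<sigma>. gen T (ketbra a b) \<sigma> \<and> (\<lambda>n. tnorm (opsub (gen_partial n a b) \<sigma>)) \<longlonglongrightarrow> 0)"

lemma gen_ketbra:
  assumes "a \<in> DM" "b \<in> DM"
  shows "gen T (ketbra a b) (gen_ketbra a b)" "(\<lambda>n. tnorm (opsub (gen_partial n a b) (gen_ketbra a b))) \<longlonglongrightarrow> 0"
proof -
  have "\<exists>\<sigma>. gen T (ketbra a b) \<sigma> \<and> (\<lambda>n. tnorm (opsub (gen_partial n a b) \<sigma>)) \<longlonglongrightarrow> 0"
    using gen_ketbra_standard_form[OF assms] unfolding gen_partial_def jump_sum_def .
  from someI_ex[OF this] show "gen T (ketbra a b) (gen_ketbra a b)"
    "(\<lambda>n. tnorm (opsub (gen_partial n a b) (gen_ketbra a b))) \<longlonglongrightarrow> 0"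
    unfolding gen_ketbra_def by blast+
qed

lemma maps_l2_gen_partial: "a \<in> DM \<Longrightarrow> b \<in> DM \<Longrightarrow> maps_l2 (gen_partial n a b)"
  unfolding gen_partial_def jump_sum_def by (simp add: maps_l2_opsum L_l2 M_l2 DM_l2)

definition jump_bound :: "'i vec \<Rightarrow> 'i vec \<Rightarrow> 'i vec \<Rightarrow> 'i vec \<Rightarrow> real" where
  "jump_bound a b a' b' =
     sqrt (2 * (vnorm (vsub a a') * vnorm (vsub (M a) (M a')))) * sqrt (2 * (vnorm b * vnorm (M b)))
     + sqrt (2 * (vnorm a' * vnorm (M a'))) * sqrt (2 * (vnorm (vsub b b') * vnorm (vsub (M b) (M b'))))"

definition drift_bound :: "'i vec \<Rightarrow> 'i vec \<Rightarrow> 'i vec \<Rightarrow> 'i vec \<Rightarrow> real" where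
  "drift_bound a b a' b' =
     vnorm (vsub (M a) (M a')) * vnorm b + vnorm (M a') * vnorm (vsub b b')
     + (vnorm (vsub a a') * vnorm (M b) + vnorm a' * vnorm (vsub (M b) (M b')))"

lemma tnorm_jump_sum_diff_le:
  assumes a: "a \<in> DM" and b: "b \<in> DM" and a': "a' \<in> DM" and b': "b' \<in> DM"
  shows "tnorm (opsub (jump_sum n a b) (jump_sum n a' b')) \<le> ennreal (jump_bound a b a' b')"
proof -
  define d where "d = vsub a a'"
  define e where "e = vsub b b'"
  have d: "d \<in> DM" and e: "e \<in> DM" using DM_subspace a a' b b' by (auto simp: d_def e_def subspace_l2_vsub)
  have Ld: "L k d = vsub (L k a) (L k a')" and Le: "L k e = vsub (L k b) (L k b')" for k
    unfolding d_def e_def using a a' b b' by (simp_all add: linear_on_vsub[OF L_linear])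
  have "tnorm (opsub (jump_sum n a b) (jump_sum n a' b'))
      \<le> (\<Sum>k<n. tnorm (opsub (ketbra (L k a) (L k b)) (ketbra (L k a') (L k b'))))"
    unfolding jump_sum_def opsum_diff using a a' by (intro tnorm_opsum_le maps_l2_opsub maps_l2_ketbra L_l2)
  also have "\<dots> \<le> (\<Sum>k<n. ennreal (vnorm (L k d) * vnorm (L k b) + vnorm (L k a') * vnorm (L k e)))"
    unfolding Ld Le using a b a' b' by (intro sum_mono tnorm_ketbra_diff_le L_l2)
  also have "\<dots> = ennreal (\<Sum>k<n. vnorm (L k d) * vnorm (L k b) + vnorm (L k a') * vnorm (L k e))"
    by (rule sum_ennreal) simp
  also have "\<dots> \<le> ennreal (jump_bound a b a' b')"
  proof (rule ennreal_leI)
    have "(\<Sum>k<n. vnorm (L k d) * vnorm (L k b) + vnorm (L k a') * vnorm (L k e))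
        \<le> sqrt (\<Sum>k<n. (vnorm (L k d))\<^sup>2) * sqrt (\<Sum>k<n. (vnorm (L k b))\<^sup>2)
          + sqrt (\<Sum>k<n. (vnorm (L k a'))\<^sup>2) * sqrt (\<Sum>k<n. (vnorm (L k e))\<^sup>2)"
      unfolding sum.distrib by (intro add_mono sum_mult_le_sqrt_sum_squares)
    also have "\<dots> \<le> jump_bound a b a' b'"
      unfolding jump_bound_def linear_on_vsub[OF M_linear a a', symmetric]
        linear_on_vsub[OF M_linear b b', symmetric] d_def[symmetric] e_def[symmetric]
      using sum_jump_norms_le[OF d, of n] sum_jump_norms_le[OF b, of n]
        sum_jump_norms_le[OF a', of n] sum_jump_norms_le[OF e, of n]
      by (intro add_mono mult_mono real_sqrt_le_mono) (auto simp: sum_nonneg)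
    finally show "(\<Sum>k<n. vnorm (L k d) * vnorm (L k b) + vnorm (L k a') * vnorm (L k e)) \<le> jump_bound a b a' b'" .
  qed
  finally show ?thesis .
qed

lemma tnorm_gen_partial_diff_le:
  assumes a: "a \<in> DM" and b: "b \<in> DM" and a': "a' \<in> DM" and b': "b' \<in> DM"
  shows "tnorm (opsub (gen_partial n a b) (gen_partial n a' b')) \<le> ennreal (jump_bound a b a' b' + drift_bound a b a' b')"
proof -
  have l: "a \<in> l2" "b \<in> l2" "a' \<in> l2" "b' \<in> l2" "M a \<in> l2" "M b \<in> l2" "M a' \<in> l2" "M b' \<in> l2"
    using assms by (auto simp: DM_l2 M_l2)
  have m: "maps_l2 (opsub (jump_sum n a b) (jump_sum n a' b'))"
    using a a' by (simp add: jump_sum_def maps_l2_opsum L_l2)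
  have eq: "opsub (gen_partial n a b) (gen_partial n a' b') = opsub (opsub (opsub (jump_sum n a b) (jump_sum n a' b'))
      (opsub (ketbra (M a) b) (ketbra (M a') b'))) (opsub (ketbra a (M b)) (ketbra a' (M b')))"
    unfolding gen_partial_def by (simp add: opsub_def vsub_def fun_eq_iff)
  have "tnorm (opsub (gen_partial n a b) (gen_partial n a' b'))
      \<le> tnorm (opsub (opsub (jump_sum n a b) (jump_sum n a' b')) (opsub (ketbra (M a) b) (ketbra (M a') b')))
        + tnorm (opsub (ketbra a (M b)) (ketbra a' (M b')))"
    unfolding eq using m l by (intro tnorm_opsub_le) auto
  also have "\<dots> \<le> (tnorm (opsub (jump_sum n a b) (jump_sum n a' b')) + tnorm (opsub (ketbra (M a) b) (ketbra (M a') b')))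
        + tnorm (opsub (ketbra a (M b)) (ketbra a' (M b')))"
    using m l by (intro add_right_mono tnorm_opsub_le) auto
  also have "\<dots> \<le> (ennreal (jump_bound a b a' b')
        + ennreal (vnorm (vsub (M a) (M a')) * vnorm b + vnorm (M a') * vnorm (vsub b b')))
      + ennreal (vnorm (vsub a a') * vnorm (M b) + vnorm a' * vnorm (vsub (M b) (M b')))"
    using l by (intro add_mono tnorm_jump_sum_diff_le[OF assms] tnorm_ketbra_diff_le)
  also have "\<dots> = ennreal (jump_bound a b a' b' + drift_bound a b a' b')"
    unfolding drift_bound_def by (simp add: ennreal_plus[symmetric] jump_bound_def add.assoc del: ennreal_plus)
  finally show ?thesis .
qed

lemma tnorm_gen_ketbra_diff_le:
  assumes a: "a \<in> DM" and b: "b \<in> DM" and a': "a' \<in> DM" and b': "b' \<in> DM"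
  shows "tnorm (opsub (gen_ketbra a b) (gen_ketbra a' b')) \<le> ennreal (jump_bound a b a' b' + drift_bound a b a' b')"
proof -
  let ?B = "ennreal (jump_bound a b a' b' + drift_bound a b a' b')"
  have m: "maps_l2 (gen_ketbra a b)" "maps_l2 (gen_ketbra a' b')"
    using gen_ketbra(1)[OF a b] gen_ketbra(1)[OF a' b'] by (simp_all add: gen_maps_l2)
  have "(\<lambda>n. tnorm (opsub (gen_partial n a b) (gen_ketbra a b)) + ?B + tnorm (opsub (gen_partial n a' b') (gen_ketbra a' b')))
      \<longlonglongrightarrow> 0 + ?B + 0"
    by (intro tendsto_add gen_ketbra(2) assms tendsto_const)
  moreover have "tnorm (opsub (gen_ketbra a b) (gen_ketbra a' b'))
      \<le> tnorm (opsub (gen_partial n a b) (gen_ketbra a b)) + ?B + tnorm (opsub (gen_partial n a' b') (gen_ketbra a' b'))" for n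
  proof -
    have mX: "maps_l2 (gen_partial n a b)" "maps_l2 (gen_partial n a' b')"
      using assms by (simp_all add: maps_l2_gen_partial)
    have "tnorm (opsub (gen_ketbra a b) (gen_ketbra a' b'))
        \<le> tnorm (opsub (gen_ketbra a b) (gen_partial n a b)) + tnorm (opsub (gen_partial n a b) (gen_ketbra a' b'))"
      using m mX by (intro tnorm_opsub_triangle)
    also have "tnorm (opsub (gen_partial n a b) (gen_ketbra a' b'))
        \<le> tnorm (opsub (gen_partial n a b) (gen_partial n a' b')) + tnorm (opsub (gen_partial n a' b') (gen_ketbra a' b'))"
      using m mX by (intro tnorm_opsub_triangle)
    also have "tnorm (opsub (gen_partial n a b) (gen_partial n a' b')) \<le> ?B"
      by (rule tnorm_gen_partial_diff_le[OF assms])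
    finally show ?thesis by (simp add: tnorm_opsub_commute add.assoc add_mono)
  qed
  ultimately have "tnorm (opsub (gen_ketbra a b) (gen_ketbra a' b')) \<le> 0 + ?B + 0"
    by (intro tendsto_le[OF trivial_limit_sequentially] always_eventually tendsto_const) auto
  then show ?thesis by simp
qed

lemma tendsto_gen_ketbra:
  assumes "a \<in> DM" "b \<in> DM" "\<And>n. y n \<in> DM" "\<And>n. z n \<in> DM"
    and y: "(\<lambda>n. vnorm (vsub (y n) a)) \<longlonglongrightarrow> 0" "(\<lambda>n. vnorm (vsub (M (y n)) (M a))) \<longlonglongrightarrow> 0"
    and z: "(\<lambda>n. vnorm (vsub (z n) b)) \<longlonglongrightarrow> 0" "(\<lambda>n. vnorm (vsub (M (z n)) (M b))) \<longlonglongrightarrow> 0"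
  shows "(\<lambda>n. tnorm (opsub (ketbra (y n) (z n)) (ketbra a b))) \<longlonglongrightarrow> 0"
    and "(\<lambda>n. tnorm (opsub (gen_ketbra (y n) (z n)) (gen_ketbra a b))) \<longlonglongrightarrow> 0"
proof -
  have nz: "(\<lambda>n. vnorm (z n)) \<longlonglongrightarrow> vnorm b" "(\<lambda>n. vnorm (M (z n))) \<longlonglongrightarrow> vnorm (M b)"
    using assms by (auto intro!: tendsto_vnorm z simp: DM_l2 M_l2)
  have "(\<lambda>n. vnorm (vsub (y n) a) * vnorm (z n) + vnorm a * vnorm (vsub (z n) b))
      \<longlonglongrightarrow> 0 * vnorm b + vnorm a * 0"
    by (intro tendsto_add tendsto_mult y z nz tendsto_const)
  then have lim: "(\<lambda>n. ennreal (vnorm (vsub (y n) a) * vnorm (z n) + vnorm a * vnorm (vsub (z n) b))) \<longlonglongrightarrow> 0"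
    using tendsto_ennrealI by fastforce
  show "(\<lambda>n. tnorm (opsub (ketbra (y n) (z n)) (ketbra a b))) \<longlonglongrightarrow> 0"
    using assms by (intro ennreal_tendsto_0_squeeze[OF always_eventually lim] allI tnorm_ketbra_diff_le) (auto simp: DM_l2)
  have "(\<lambda>n. jump_bound (y n) (z n) a b + drift_bound (y n) (z n) a b)
      \<longlonglongrightarrow> (sqrt (2 * (0 * 0)) * sqrt (2 * (vnorm b * vnorm (M b))) + sqrt (2 * (vnorm a * vnorm (M a))) * sqrt (2 * (0 * 0)))
        + (0 * vnorm b + vnorm (M a) * 0 + (0 * vnorm (M b) + vnorm a * 0))"
    unfolding jump_bound_def drift_bound_def
    by (intro tendsto_add tendsto_mult tendsto_real_sqrt y z nz tendsto_const)
  then have lim': "(\<lambda>n. ennreal (jump_bound (y n) (z n) a b + drift_bound (y n) (z n) a b)) \<longlonglongrightarrow> 0"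
    using tendsto_ennrealI by fastforce
  show "(\<lambda>n. tnorm (opsub (gen_ketbra (y n) (z n)) (gen_ketbra a b))) \<longlonglongrightarrow> 0"
    using assms by (intro ennreal_tendsto_0_squeeze[OF always_eventually lim'] allI tnorm_gen_ketbra_diff_le)
qed

text \<open>A sequence in \<open>DM\<close> that is dense for the graph norm of \<open>M\<close>: its member with index
  \<open>to_nat (p, q, m)\<close> is graph-norm close to \<open>(rat_vec p, rat_vec q)\<close> whenever some element of \<open>DM\<close> is.\<close>

definition graph_near :: "('i \<times> rat \<times> rat) list \<times> ('i \<times> rat \<times> rat) list \<times> nat \<Rightarrow> 'i vec \<Rightarrow> bool" where
  "graph_near j x \<longleftrightarrow> (case j of (p, q, m) \<Rightarrow> x \<in> DM \<and>
     vnorm (vsub x (rat_vec p)) < inverse (Suc m) \<and> vnorm (vsub (M x) (rat_vec q)) < inverse (Suc m))"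

definition dense_seq :: "nat \<Rightarrow> 'i vec" where
  "dense_seq n = (if \<exists>x. graph_near (from_nat n) x then SOME x. graph_near (from_nat n) x else vzero)"

lemma dense_seq_DM: "dense_seq n \<in> DM"
proof (cases "\<exists>x. graph_near (from_nat n) x")
  case True
  then have "graph_near (from_nat n) (dense_seq n)" unfolding dense_seq_def by (simp add: someI_ex)
  then show ?thesis by (auto simp: graph_near_def split: prod.splits)
qed (use DM_subspace in \<open>simp add: dense_seq_def subspace_l2_def\<close>)

lemma dense_seq_graph_dense:
  assumes a: "a \<in> DM" and e: "\<epsilon> > 0"
  shows "\<exists>n. vnorm (vsub (dense_seq n) a) < \<epsilon> \<and> vnorm (vsub (M (dense_seq n)) (M a)) < \<epsilon>"
proof -
  obtain m where m: "inverse (real (Suc m)) < \<epsilon>/2" using reals_Archimedean[of "\<epsilon>/2"] e by auto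
  have r: "inverse (real (Suc m)) > 0" by simp
  obtain p where p: "vnorm (vsub a (rat_vec p)) < inverse (Suc m)" using l2_dense_rat_vec[OF DM_l2[OF a] r] by blast
  obtain q where q: "vnorm (vsub (M a) (rat_vec q)) < inverse (Suc m)" using l2_dense_rat_vec[OF M_l2[OF a] r] by blast
  define n where "n = to_nat (p, q, m)"
  have "graph_near (from_nat n) a" using a p q by (simp add: graph_near_def n_def)
  then have "graph_near (p, q, m) (dense_seq n)"
    unfolding dense_seq_def by (simp add: n_def) (metis someI_ex)
  then have x: "dense_seq n \<in> DM" "vnorm (vsub (dense_seq n) (rat_vec p)) < inverse (Suc m)"
    "vnorm (vsub (M (dense_seq n)) (rat_vec q)) < inverse (Suc m)"
    by (simp_all add: graph_near_def)
  have "vnorm (vsub (dense_seq n) a) \<le> vnorm (vsub (dense_seq n) (rat_vec p)) + vnorm (vsub (rat_vec p) a)"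
    using x a by (intro vnorm_sub_triangle) (auto simp: DM_l2 rat_vec_l2)
  moreover have "vnorm (vsub (M (dense_seq n)) (M a)) \<le> vnorm (vsub (M (dense_seq n)) (rat_vec q)) + vnorm (vsub (rat_vec q) (M a))"
    using x a by (intro vnorm_sub_triangle) (auto simp: M_l2 rat_vec_l2)
  ultimately show ?thesis
    using x p q m vnorm_sub_commute[of "rat_vec p" a] vnorm_sub_commute[of "rat_vec q" "M a"] by (intro exI[of _ n]) linarith
qed

definition basis :: "'i vec set" where
  "basis = gs_basis dense_seq"

lemma basis_subset_DM: "basis \<subseteq> DM"
  unfolding basis_def by (rule gs_basis_subset[where V = DM and d = dense_seq, OF DM_subspace dense_seq_DM])

lemma basis_subset_l2: "basis \<subseteq> l2"
  using basis_subset_DM DM_l2 by blast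

lemma lspan_basis_subset_DM: "lspan basis \<subseteq> DM"
  by (rule subspace_l2_lspan[OF DM_subspace basis_subset_DM])

lemma dense_seq_in_lspan_basis: "dense_seq n \<in> lspan basis"
  unfolding basis_def by (rule in_lspan_gs_basis[where V = DM and d = dense_seq, OF DM_subspace dense_seq_DM])

lemma orthonormal_basis_basis: "orthonormal_basis basis"
proof (rule orthonormal_basisI_dense_span[OF basis_subset_l2])
  show "inner_l2 e e' = (if e = e' then 1 else 0)" if "e \<in> basis" "e' \<in> basis" for e e'
    using that unfolding basis_def
    by (rule inner_l2_gs_basis[where V = DM and d = dense_seq, OF DM_subspace dense_seq_DM])
  show "\<exists>y\<in>lspan basis. vnorm (vsub x y) < \<epsilon>" if x: "x \<in> l2" and e: "\<epsilon> > 0" for x \<epsilon>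
  proof -
    have e2: "\<epsilon>/2 > 0" using e by simp
    then obtain a where a: "a \<in> DM" "vnorm (vsub x a) < \<epsilon>/2"
      using DM_dense x unfolding densely_defined_def by blast
    obtain n where n: "vnorm (vsub (dense_seq n) a) < \<epsilon>/2"
      using dense_seq_graph_dense[OF a(1) e2] by blast
    have "vnorm (vsub x (dense_seq n)) \<le> vnorm (vsub x a) + vnorm (vsub a (dense_seq n))"
      using x a dense_seq_DM by (intro vnorm_sub_triangle) (auto simp: DM_l2)
    then have "vnorm (vsub x (dense_seq n)) < \<epsilon>" using a(2) n vnorm_sub_commute[of a "dense_seq n"] by linarith
    then show ?thesis using dense_seq_in_lspan_basis by blast
  qed
qed

lemma is_core_op_lspan_basis: "is_core_op DM M (lspan basis)"
  unfolding is_core_op_def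
proof (intro conjI ballI lspan_basis_subset_DM)
  fix x assume x: "x \<in> DM"
  have "\<forall>m. \<exists>n. vnorm (vsub (dense_seq n) x) < inverse (Suc m) \<and> vnorm (vsub (M (dense_seq n)) (M x)) < inverse (Suc m)"
  proof
    fix m :: nat
    have "inverse (real (Suc m)) > 0" by simp
    then show "\<exists>n. vnorm (vsub (dense_seq n) x) < inverse (Suc m) \<and> vnorm (vsub (M (dense_seq n)) (M x)) < inverse (Suc m)"
      by (rule dense_seq_graph_dense[OF x])
  qed
  then obtain N where N: "\<forall>m. vnorm (vsub (dense_seq (N m)) x) < inverse (Suc m)
      \<and> vnorm (vsub (M (dense_seq (N m))) (M x)) < inverse (Suc m)"
    by (rule choice[THEN exE])
  have "(\<lambda>m. vnorm (vsub (dense_seq (N m)) x)) \<longlonglongrightarrow> 0" "(\<lambda>m. vnorm (vsub (M (dense_seq (N m))) (M x))) \<longlonglongrightarrow> 0"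
    using N by (simp_all add: LIMSEQ_0_less_inverse_Suc del: of_nat_Suc)
  then show "\<exists>y. (\<forall>n. y n \<in> lspan basis) \<and> (\<lambda>n. vnorm (vsub (y n) x)) \<longlonglongrightarrow> 0 \<and>
      (\<lambda>n. vnorm (vsub (M (y n)) (M x))) \<longlonglongrightarrow> 0"
    using dense_seq_in_lspan_basis by (intro exI[of _ "\<lambda>m. dense_seq (N m)"] conjI allI)
qed

lemma gen_lspan2_basis: "q \<in> lspan2 basis \<Longrightarrow> \<exists>s. gen T q s"
proof -
  assume "q \<in> lspan2 basis"
  then obtain n c a b where q: "q = opsum n (\<lambda>k. opscale (c k) (ketbra (a k) (b k)))"
    and ab: "\<forall>k<n. a k \<in> DM \<and> b k \<in> DM"
    unfolding lspan2_def using basis_subset_DM by blast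
  from ab have "\<exists>s. gen T (opsum n (\<lambda>k. opscale (c k) (ketbra (a k) (b k)))) s"
  proof (induction n)
    case 0
    then show ?case using gen_opzero[OF tp_qds] by auto
  next
    case (Suc n)
    then obtain s where "gen T (opsum n (\<lambda>k. opscale (c k) (ketbra (a k) (b k)))) s" by auto
    moreover have "a n \<in> DM" "b n \<in> DM" using Suc.prems by auto
    ultimately show ?case unfolding opsum_Suc by (blast intro: gen_opadd_opscale[OF tp_qds] gen_ketbra(1))
  qed
  then show ?thesis using q by simp
qed

lemma graph_approx_ketbra:
  assumes a: "a \<in> DM" and b: "b \<in> DM"
  shows "graph_approx T (lspan2 basis) (ketbra a b) (gen_ketbra a b)"
  unfolding graph_approx_def
proof (intro allI impI)
  fix \<epsilon> :: real assume e: "\<epsilon> > 0"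
  obtain y where y: "\<And>n. y n \<in> lspan basis" "(\<lambda>n. vnorm (vsub (y n) a)) \<longlonglongrightarrow> 0"
    "(\<lambda>n. vnorm (vsub (M (y n)) (M a))) \<longlonglongrightarrow> 0"
    using is_core_op_lspan_basis a unfolding is_core_op_def by blast
  obtain z where z: "\<And>n. z n \<in> lspan basis" "(\<lambda>n. vnorm (vsub (z n) b)) \<longlonglongrightarrow> 0"
    "(\<lambda>n. vnorm (vsub (M (z n)) (M b))) \<longlonglongrightarrow> 0"
    using is_core_op_lspan_basis b unfolding is_core_op_def by blast
  have yz: "\<And>n. y n \<in> DM" "\<And>n. z n \<in> DM" using y(1) z(1) lspan_basis_subset_DM by auto
  have "\<forall>\<^sub>F n in sequentially. tnorm (opsub (ketbra (y n) (z n)) (ketbra a b)) \<le> ennreal \<epsilon>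
      \<and> tnorm (opsub (gen_ketbra (y n) (z n)) (gen_ketbra a b)) \<le> ennreal \<epsilon>"
    using tendsto_gen_ketbra[OF a b yz y(2,3) z(2,3)] e by (intro eventually_conj eventually_tnorm_le)
  then obtain n where "tnorm (opsub (ketbra (y n) (z n)) (ketbra a b)) \<le> ennreal \<epsilon>"
    "tnorm (opsub (gen_ketbra (y n) (z n)) (gen_ketbra a b)) \<le> ennreal \<epsilon>"
    by (auto simp: eventually_sequentially)
  moreover have "ketbra (y n) (z n) \<in> lspan2 basis"
    using y(1) z(1) by (rule ketbra_in_lspan2[OF basis_subset_l2])
  moreover have "gen T (ketbra (y n) (z n)) (gen_ketbra (y n) (z n))" using yz by (rule gen_ketbra(1))
  ultimately show "\<exists>q s. q \<in> lspan2 basis \<and> gen T q s \<and> tnorm (opsub q (ketbra a b)) \<le> ennreal \<epsilon>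
      \<and> tnorm (opsub s (gen_ketbra a b)) \<le> ennreal \<epsilon>"
    by blast
qed

lemma graph_approx_D0:
  assumes r: "r \<in> D0 DM" and g: "gen T r s"
  shows "graph_approx T (lspan2 basis) r s"
proof -
  obtain m a b where rab: "r = opsum m (\<lambda>k. ketbra (a k) (b k))" and ab: "\<forall>k<m. a k \<in> DM \<and> b k \<in> DM"
    using r unfolding D0_def by blast
  from ab have "gen T (opsum m (\<lambda>k. ketbra (a k) (b k))) (opsum m (\<lambda>k. gen_ketbra (a k) (b k))) \<and>
    graph_approx T (lspan2 basis) (opsum m (\<lambda>k. ketbra (a k) (b k))) (opsum m (\<lambda>k. gen_ketbra (a k) (b k)))"
  proof (induction m)
    case 0
    have "graph_approx T (lspan2 basis) opzero opzero"
      unfolding graph_approx_def using gen_opzero[OF tp_qds] lspan2_opzero by (auto intro!: exI[of _ opzero])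
    then show ?case using gen_opzero[OF tp_qds] by simp
  next
    case (Suc m)
    then have IH: "gen T (opsum m (\<lambda>k. ketbra (a k) (b k))) (opsum m (\<lambda>k. gen_ketbra (a k) (b k)))"
      "graph_approx T (lspan2 basis) (opsum m (\<lambda>k. ketbra (a k) (b k))) (opsum m (\<lambda>k. gen_ketbra (a k) (b k)))"
      and abm: "a m \<in> DM" "b m \<in> DM"
      by auto
    have g: "gen T (ketbra (a m) (b m)) (gen_ketbra (a m) (b m))" using abm by (rule gen_ketbra(1))
    have ga: "graph_approx T (lspan2 basis) (ketbra (a m) (b m)) (gen_ketbra (a m) (b m))"
      using abm by (rule graph_approx_ketbra)
    show ?case unfolding opsum_Suc
      using gen_opadd[OF tp_qds IH(1) g] graph_approx_opadd[OF tp_qds lspan2_opadd IH(1) g IH(2) ga] ..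
  qed
  then show ?thesis unfolding rab[symmetric] using graph_approx_gen_cong[OF tp_qds _ g] by blast
qed

lemma is_core_gen_lspan2_basis: "is_core_gen T (lspan2 basis)"
  unfolding is_core_gen_def
proof (intro conjI subsetI equalityI)
  show "q \<in> gen_dom T" if "q \<in> lspan2 basis" for q
    using gen_lspan2_basis[OF that] unfolding gen_dom_def by blast
  show "\<rho> \<in> gen_dom T" if "\<rho> \<in> graph_closure T (lspan2 basis)" for \<rho>
    using that unfolding graph_closure_def gen_dom_def by blast
  show "\<rho> \<in> graph_closure T (lspan2 basis)" if \<rho>: "\<rho> \<in> gen_dom T" for \<rho>
  proof -
    obtain \<sigma> where g: "gen T \<rho> \<sigma>" and "graph_approx T (D0 DM) \<rho> \<sigma>"
      using \<rho> unfolding gen_dom_standard_form graph_closure_eq_graph_approx by blast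
    then have "graph_approx T (lspan2 basis) \<rho> \<sigma>"
      using graph_approx_trans[OF _ g graph_approx_D0] by blast
    with g show ?thesis unfolding graph_closure_eq_graph_approx by blast
  qed
qed

end

theorem proposition3p9:
  fixes T :: "real \<Rightarrow> ('i::countable) op \<Rightarrow> 'i op"
    and DM :: "'i vec set" and M :: "'i op" and L :: "nat \<Rightarrow> 'i op"
  assumes "tp_qds T"
    and "gen_standard_form T DM M L"
  shows "\<exists>E. orthonormal_basis E \<and> is_core_op DM M (lspan E) \<and> is_core_gen T (lspan2 E)"
proof -
  interpret standard_form T DM M L using assms by unfold_locales
  show ?thesis using orthonormal_basis_basis is_core_op_lspan_basis is_core_gen_lspan2_basis by blast
qed

end
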